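(* Let $\mathbf A\in\mathbb C^{m\times n}$, $\mathbf W\in\mathbb C^{n\times m}$, $k=\max\{\operatorname{Ind}(\mathbf A\mathbf W),\operatorname{Ind}(\mathbf W\mathbf A)\}$ and $\operatorname{rank}(\mathbf A\mathbf W)^{k}=r$. Then the $\mathbf W$-weighted Drazin inverse $\mathbf A_{d,W}=(a^{d,W}_{ij})\in\mathbb C^{m\times n}$ satisfies, for all $i=1,\dots,m$ and $j=1,\dots,n$, \[ a^{d,W}_{ij}=\frac{\sum_{\beta\in J_{r,m}\{i\}}\left|\left((\mathbf A\mathbf W)^{k+2}_{.i}(\bar{\mathbf v}^{(k)}_{.j})\right)^{\beta}_{\beta}\right|}{\sum_{\beta\in J_{r,m}}\left|((\mathbf A\mathbf W)^{k+2})^{\beta}_{\beta}\right|} \] and \[ a^{d,W}_{ij}=\frac{\sum_{\alpha\in I_{r,n}\{j\}}\left|\left((\mathbf W\mathbf A)^{k+2}_{j.}(\bar{\mathbf u}^{(k)}_{i.})\right)^{\alpha}_{\alpha}\right|}{\sum_{\alpha\in I_{r,n}}\left|((\mathbf W\mathbf A)^{k+2})^{\alpha}_{\alpha}\right|}, \] where $\bar{\mathbf v}^{(k)}_{.j}$ is the $j$-th column of $(\mathbf A\mathbf W)^{k}\mathbf A$ and $\bar{\mathbf u}^{(k)}_{i.}$ is the $i$-th row of $\mathbf A(\mathbf W\mathbf A)^{k}$.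
   Context: All matrices are complex. For a square $\mathbf M$, $\operatorname{Ind}\mathbf M$ is the smallest nonnegative integer $k$ with $\operatorname{rank}\mathbf M^{k+1}=\operatorname{rank}\mathbf M^{k}$. The $\mathbf W$-weighted Drazin inverse $\mathbf A_{d,W}$ is the unique $\mathbf X\in\mathbb C^{m\times n}$ with $(\mathbf A\mathbf W)^{k+1}\mathbf X\mathbf W=(\mathbf A\mathbf W)^{k}$, $\mathbf X\mathbf W\mathbf A\mathbf W\mathbf X=\mathbf X$, $\mathbf A\mathbf W\mathbf X=\mathbf X\mathbf W\mathbf A$, with $k=\max\{\operatorname{Ind}(\mathbf A\mathbf W),\operatorname{Ind}(\mathbf W\mathbf A)\}$. For a square matrix $\mathbf M$, $\mathbf M_{.i}(\mathbf c)$ (resp. $\mathbf M_{i.}(\mathbf c)$) is obtained from $\mathbf M$ by replacing its $i$-th column (resp. row) by the vector $\mathbf c$. For $1\le k\le p$, $L_{k,p}$ is the set of strictly increasing sequences of $k$ elements of $\{1,\dots,p\}$; $I_{k,p}=J_{k,p}=L_{k,p}$, $I_{k,p}\{i\}=J_{k,p}\{i\}=\{\alpha\in L_{k,p}: i\in\alpha\}$. $\mathbf M^{\alpha}_{\alpha}$ is the principal submatrix indexed by $\alpha$; $|\cdot|$ is the determinant. *)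

theory Defs
  imports "Jordan_Normal_Form.DL_Rank" "Jordan_Normal_Form.DL_Submatrix"
begin

definition mrank :: "complex mat \<Rightarrow> nat" where
  "mrank M = vec_space.rank (dim_row M) M"

definition mind :: "complex mat \<Rightarrow> nat" where
  "mind M = (LEAST k. mrank (M ^\<^sub>m (k+1)) = mrank (M ^\<^sub>m k))"

definition is_wdrazin :: "complex mat \<Rightarrow> complex mat \<Rightarrow> complex mat \<Rightarrow> bool" where
  "is_wdrazin A W X \<longleftrightarrow>
     (let k = max (mind (A * W)) (mind (W * A)) in
       X \<in> carrier_mat (dim_row A) (dim_col A) \<and>
       (A * W) ^\<^sub>m (k+1) * X * W = (A * W) ^\<^sub>m k \<and>
       X * W * A * W * X = X \<and>
       A * W * X = X * W * A)"

definition replace_col :: "complex mat \<Rightarrow> nat \<Rightarrow> complex vec \<Rightarrow> complex mat" where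
  "replace_col M i c = mat (dim_row M) (dim_col M) (\<lambda>(a,b). if b = i then c $ a else M $$ (a,b))"

definition replace_row :: "complex mat \<Rightarrow> nat \<Rightarrow> complex vec \<Rightarrow> complex mat" where
  "replace_row M i c = mat (dim_row M) (dim_col M) (\<lambda>(a,b). if a = i then c $ b else M $$ (a,b))"

definition psub :: "complex mat \<Rightarrow> nat set \<Rightarrow> complex mat" where
  "psub M \<beta> = submatrix M \<beta> \<beta>"

(* L_{r,p}: r-element (strictly increasing) index sequences of {1..p}, 0-based as subsets *)
definition Lset :: "nat \<Rightarrow> nat \<Rightarrow> nat set set" where
  "Lset r p = {\<beta>. \<beta> \<subseteq> {0..<p} \<and> card \<beta> = r}"

end

theory Submission
  imports Defs "Jordan_Normal_Form.DL_Rank_Submatrix" "Jordan_Normal_Form.Char_Poly"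
    "Jordan_Normal_Form.Matrix_Kernel"
begin

text \<open>Put \<open>B = (A W) ^ (k + 2)\<close> and \<open>G = (X W) ^ (k + 2)\<close>. The defining equations make \<open>X W\<close> a
  Drazin inverse of \<open>A W\<close>, so \<open>G\<close> is a group inverse of \<open>B\<close>, \<open>rank B = rank ((A W) ^ k) = r\<close>,
  every column \<open>x\<close> of \<open>X\<close> lies in the range of \<open>B\<close>, and \<open>B x\<close> is the corresponding column of
  \<open>(A W) ^ k A\<close>.

  For a group invertible \<open>B\<close> of rank \<open>r\<close>, the sum of the principal \<open>r\<close>-minors is the coefficient
  of \<open>t ^ (m - r)\<close> in \<open>det (t I + B)\<close>. With \<open>P = B G\<close>, the factorisation
  \<open>t I + B = (P + t (I - P)) (I - P + B + t P)\<close> and \<open>det (P + t (I - P)) = t ^ (m - r)\<close> identify it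
  with \<open>det (I - P + B)\<close>, which is nonzero. Cramer's rule for \<open>B + t I\<close> applied to
  \<open>(B + t I) x = B x + t x\<close>, read at the coefficient of \<open>t ^ (m - r)\<close>, expresses \<open>x\<^sub>i\<close> by principal
  minors of \<open>B\<close> with column \<open>i\<close> replaced by \<open>B x\<close>; the minors with column \<open>i\<close> replaced by \<open>x\<close>
  itself drop out because \<open>x\<close> lies in the range of \<open>B\<close>. The row formula is the same argument for
  the transpose of \<open>(W A) ^ (k + 2)\<close>, with \<open>W X\<close> as Drazin inverse of \<open>W A\<close>.\<close>

section \<open>Rank of products\<close>

lemma rank_nullity_mat:
  fixes A :: "'a :: field mat"
  assumes A: "A \<in> carrier_mat nr nc"
  shows "vec_space.rank nr A + kernel.dim nc A = nc"
proof -
  interpret K: kernel nr nc A by (unfold_locales, rule A)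
  interpret NR: vec_space "TYPE('a)" nr .
  have hom: "(\<lambda>v. A *\<^sub>v v) \<in> LinearCombinations.module_hom class_ring
      (module_vec TYPE('a) nc) (module_vec TYPE('a) nr)"
    unfolding LinearCombinations.module_hom_def using A
    by (auto simp: module_vec_simps mult_add_distrib_mat_vec mult_mat_vec)
  interpret LM: linear_map class_ring "module_vec TYPE('a) nc" "module_vec TYPE('a) nr" "\<lambda>v. A *\<^sub>v v"
    by (intro linear_map.intro vec_vs mod_hom.intro mod_hom_axioms.intro vec_module hom)
  have rn: "vectorspace.dim class_ring ((module_vec TYPE('a) nr)\<lparr>carrier := LM.imT\<rparr>)
      + vectorspace.dim class_ring ((module_vec TYPE('a) nc)\<lparr>carrier := LM.kerT\<rparr>) = K.NC.dim"
    by (rule LM.rank_nullity) simp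
  have im: "LM.imT = NR.col_space A"
    unfolding NR.col_space_eq[OF A] mod_hom.im_def[OF LM.mod_hom_axioms] using A
    by (auto simp: module_vec_simps)
  have ker: "LM.kerT = mat_kernel A"
    unfolding mod_hom.ker_def[OF LM.mod_hom_axioms] mat_kernel_def using A
    by (auto simp: module_vec_simps)
  show ?thesis using rn unfolding im ker K.NC.dim_is_n NR.rank_def NR.col_space_def by simp
qed

lemma (in vec_space) subspace_dim_mono:
  assumes T: "VectorSpace.subspace class_ring T V" and S: "VectorSpace.subspace class_ring S V"
    and ST: "S \<subseteq> T"
    and fT: "vectorspace.fin_dim class_ring (vs T)" and fS: "vectorspace.fin_dim class_ring (vs S)"
  shows "vectorspace.dim class_ring (vs S) \<le> vectorspace.dim class_ring (vs T)"
  using vectorspace.subspace_dim[OF subspace_is_vs[OF T] nested_subspaces[OF T S ST] fT] fS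
  by simp

lemma (in vec_space) mat_kernel_subspace:
  assumes "Y \<in> carrier_mat nr n"
  shows "VectorSpace.subspace class_ring (mat_kernel Y) V"
  unfolding VectorSpace.subspace_def submodule_def using assms
  by (auto simp: mat_kernel_def mult_add_distrib_mat_vec mult_mat_vec vectorspace_axioms
     module_axioms class_ring_simps)

lemma (in vec_space) mat_kernel_fin_dim:
  assumes Y: "Y \<in> carrier_mat nr n"
  shows "vectorspace.fin_dim class_ring (vs (mat_kernel Y))"
proof -
  interpret K: kernel nr n Y by (unfold_locales, rule Y)
  obtain B where "finite B" "K.basis B" using kernel_basis_exists[OF Y] by auto
  then show ?thesis unfolding K.Ker.fin_dim_def using K.Ker.basis_def by auto
qed

lemma (in vec_space) col_space_subspace:
  assumes "A \<in> carrier_mat n nc"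
  shows "VectorSpace.subspace class_ring (col_space A) V"
  unfolding col_space_def using assms by (intro span_is_subspace) (auto simp: cols_def)

lemma rank_mult_le_left:
  fixes A :: "'a :: field mat"
  assumes A: "A \<in> carrier_mat a b" and B: "B \<in> carrier_mat b c"
  shows "vec_space.rank a (A * B) \<le> vec_space.rank a A"
proof -
  interpret V: vec_space "TYPE('a)" a .
  have AB: "A * B \<in> carrier_mat a c" using A B by auto
  have "V.col_space (A * B) \<subseteq> V.col_space A"
    unfolding V.col_space_eq[OF AB] V.col_space_eq[OF A]
  proof safe
    fix x :: "'a vec" assume "x \<in> carrier_vec (dim_col (A * B))"
    then show "\<exists>y\<in>carrier_vec (dim_col A). A *\<^sub>v y = A * B *\<^sub>v x"
      using A B by (intro bexI[of _ "B *\<^sub>v x"]) (auto simp: assoc_mult_mat_vec)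
  qed (use A B in auto)
  then show ?thesis unfolding V.rank_def
    using V.subspace_dim_mono[OF V.col_space_subspace[OF A] V.col_space_subspace[OF AB] _
      V.fin_dim_span_cols[OF A, folded V.col_space_def]
      V.fin_dim_span_cols[OF AB, folded V.col_space_def]]
    unfolding V.col_space_def by blast
qed

lemma kernel_dim_mult_mono:
  fixes A :: "'a :: field mat"
  assumes A: "A \<in> carrier_mat a b" and B: "B \<in> carrier_mat b c"
  shows "kernel.dim c B \<le> kernel.dim c (A * B)"
proof -
  interpret V: vec_space "TYPE('a)" c .
  have AB: "A * B \<in> carrier_mat a c" using A B by auto
  show ?thesis
    using V.subspace_dim_mono[OF V.mat_kernel_subspace[OF AB] V.mat_kernel_subspace[OF B]
      mat_kernel_mult_subset[OF B A] V.mat_kernel_fin_dim[OF AB] V.mat_kernel_fin_dim[OF B]]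
    by simp
qed

lemma rank_mult_le_right:
  fixes A :: "'a :: field mat"
  assumes A: "A \<in> carrier_mat a b" and B: "B \<in> carrier_mat b c"
  shows "vec_space.rank a (A * B) \<le> vec_space.rank b B"
  using rank_nullity_mat[OF B] rank_nullity_mat[of "A * B" a c] kernel_dim_mult_mono[OF A B] A B
  by fastforce

lemma rank_add_rank_le_of_mult_zero:
  fixes A :: "'a :: field mat"
  assumes A: "A \<in> carrier_mat a b" and B: "B \<in> carrier_mat b c" and AB: "A * B = 0\<^sub>m a c"
  shows "vec_space.rank a A + vec_space.rank b B \<le> b"
proof -
  interpret V: vec_space "TYPE('a)" b .
  have "V.col_space B \<subseteq> mat_kernel A"
    unfolding V.col_space_eq[OF B]
  proof safe
    fix x :: "'a vec" assume x: "x \<in> carrier_vec (dim_col B)"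
    have "A *\<^sub>v (B *\<^sub>v x) = (A * B) *\<^sub>v x" using A B x by (auto simp: assoc_mult_mat_vec)
    also have "\<dots> = 0\<^sub>v a" unfolding AB using x B by auto
    finally show "B *\<^sub>v x \<in> mat_kernel A" using A B x by (intro mat_kernelI[OF A]) auto
  qed
  then have "vec_space.rank b B \<le> kernel.dim b A"
    unfolding V.rank_def
    using V.subspace_dim_mono[OF V.mat_kernel_subspace[OF A] V.col_space_subspace[OF B] _
      V.mat_kernel_fin_dim[OF A] V.fin_dim_span_cols[OF B, folded V.col_space_def]]
    unfolding V.col_space_def by simp
  then show ?thesis using rank_nullity_mat[OF A] by simp
qed


section \<open>Principal minors\<close>

text \<open>The principal submatrix of \<open>C\<close> on \<open>\<beta>\<close>, padded by the identity to size \<open>m\<close>: it has the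
  same determinant (\<open>det_principal_submatrix_eq_det_pad\<close>) but keeps all minors of \<open>C\<close> in one dimension.\<close>
definition pad_principal :: "nat \<Rightarrow> nat set \<Rightarrow> 'a :: comm_ring_1 mat \<Rightarrow> 'a mat" where
  "pad_principal m \<beta> C =
     mat m m (\<lambda>(a,b). if a \<in> \<beta> \<and> b \<in> \<beta> then C $$ (a,b) else if a = b then 1 else 0)"

lemma pad_principal_carrier[simp]: "pad_principal m \<beta> C \<in> carrier_mat m m"
  unfolding pad_principal_def by auto

lemma det_permute_rows_cols:
  fixes Z :: "'a :: comm_ring_1 mat"
  assumes Z: "Z \<in> carrier_mat m m" and \<sigma>: "\<sigma> permutes {0..<m}"
  shows "det (mat m m (\<lambda>(a,b). Z $$ (\<sigma> a, \<sigma> b))) = det Z"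
proof -
  let ?Z1 = "mat m m (\<lambda>(a,b). Z $$ (\<sigma> a, b))"
  have "\<And>i. i < m \<Longrightarrow> \<sigma> i < m" using \<sigma> by (simp add: permutes_in_image)
  then have eq: "mat m m (\<lambda>(a,b). Z $$ (\<sigma> a, \<sigma> b)) =
      transpose_mat (mat m m (\<lambda>(i,j). (transpose_mat ?Z1) $$ (\<sigma> i, j)))"
    by (intro eq_matI) auto
  have "det (mat m m (\<lambda>(a,b). Z $$ (\<sigma> a, \<sigma> b)))
      = det (mat m m (\<lambda>(i,j). (transpose_mat ?Z1) $$ (\<sigma> i, j)))"
    unfolding eq by (rule det_transpose) auto
  also have "\<dots> = signof \<sigma> * det (transpose_mat ?Z1)"
    by (rule det_permute_rows[OF _ \<sigma>]) auto
  also have "det (transpose_mat ?Z1) = det ?Z1" by (rule det_transpose) auto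
  also have "det ?Z1 = signof \<sigma> * det Z" by (rule det_permute_rows[OF Z \<sigma>])
  finally show ?thesis by (simp add: mult.assoc[symmetric] sign_def)
qed

lemma bij_betw_pick:
  assumes "finite \<beta>"
  shows "bij_betw (pick \<beta>) {0..<card \<beta>} \<beta>"
proof -
  have inj: "inj_on (pick \<beta>) {0..<card \<beta>}"
    unfolding inj_on_def by (metis atLeastLessThan_iff nat_neq_iff pick_mono)
  have sub: "pick \<beta> ` {0..<card \<beta>} \<subseteq> \<beta>" using pick_in_set by auto
  have "card (pick \<beta> ` {0..<card \<beta>}) = card \<beta>" using card_image[OF inj] by simp
  then have "pick \<beta> ` {0..<card \<beta>} = \<beta>" using card_subset_eq[OF assms sub] by simp
  then show ?thesis using inj unfolding bij_betw_def by simp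
qed

lemma permutes_extending_pick:
  assumes \<beta>: "\<beta> \<subseteq> {0..<m}"
  obtains \<sigma> where "\<sigma> permutes {0..<m}" "\<And>a. a < card \<beta> \<Longrightarrow> \<sigma> a = pick \<beta> a"
    "\<And>a. card \<beta> \<le> a \<Longrightarrow> a < m \<Longrightarrow> \<sigma> a \<notin> \<beta>"
proof -
  define k where "k = card \<beta>"
  have fin: "finite \<beta>" using \<beta> finite_subset by blast
  have km: "k \<le> m" unfolding k_def using card_mono[OF _ \<beta>] by simp
  have "card ({0..<m} - \<beta>) = card {k..<m}"
    using card_Diff_subset[OF fin \<beta>] unfolding k_def by simp
  then obtain \<tau> where \<tau>: "bij_betw \<tau> {k..<m} ({0..<m} - \<beta>)"
    using finite_same_card_bij[of "{k..<m}" "{0..<m} - \<beta>"] by auto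
  define \<sigma> where "\<sigma> a = (if a < k then pick \<beta> a else if a < m then \<tau> a else a)" for a
  have b1: "bij_betw \<sigma> {0..<k} \<beta>"
    using bij_betw_pick[OF fin] unfolding k_def[symmetric]
    by (rule bij_betw_cong[THEN iffD1, rotated]) (auto simp: \<sigma>_def)
  have b2: "bij_betw \<sigma> {k..<m} ({0..<m} - \<beta>)"
    using \<tau> by (rule bij_betw_cong[THEN iffD1, rotated]) (auto simp: \<sigma>_def)
  have "bij_betw \<sigma> ({0..<k} \<union> {k..<m}) (\<beta> \<union> ({0..<m} - \<beta>))"
    by (rule bij_betw_combine[OF b1 b2]) auto
  moreover have "{0..<k} \<union> {k..<m} = {0..<m}" "\<beta> \<union> ({0..<m} - \<beta>) = {0..<m}"
    using km \<beta> by auto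
  ultimately have "\<sigma> permutes {0..<m}" by (intro bij_imp_permutes) (auto simp: \<sigma>_def)
  moreover have "\<sigma> a \<notin> \<beta>" if "k \<le> a" "a < m" for a
    using b2 bij_betwE that by fastforce
  ultimately show ?thesis using that unfolding k_def \<sigma>_def by auto
qed

lemma det_principal_submatrix_eq_det_pad:
  fixes C :: "'a :: idom mat"
  assumes C: "C \<in> carrier_mat m m" and \<beta>: "\<beta> \<subseteq> {0..<m}"
  shows "det (submatrix C \<beta> \<beta>) = det (pad_principal m \<beta> C)"
proof -
  define k where "k = card \<beta>"
  have km: "k \<le> m" unfolding k_def using card_mono[OF _ \<beta>] by simp
  have "card {i. i < m \<and> i \<in> \<beta>} = k" unfolding k_def
    by (rule arg_cong[of _ _ card]) (use \<beta> in auto)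
  then have ps: "submatrix C \<beta> \<beta> = mat k k (\<lambda>(i,j). C $$ (pick \<beta> i, pick \<beta> j))"
    unfolding submatrix_def using C by auto
  obtain \<sigma> where \<sigma>: "\<sigma> permutes {0..<m}" and lo: "\<And>a. a < k \<Longrightarrow> \<sigma> a = pick \<beta> a"
    and hi: "\<And>a. k \<le> a \<Longrightarrow> a < m \<Longrightarrow> \<sigma> a \<notin> \<beta>"
    using permutes_extending_pick[OF \<beta>] unfolding k_def by metis
  have lo_in: "\<sigma> a \<in> \<beta>" if "a < k" for a
    using lo[OF that] pick_in_set[of a \<beta>] that unfolding k_def by auto
  have inj: "\<sigma> a = \<sigma> b \<longleftrightarrow> a = b" for a b
    using permutes_inj[OF \<sigma>] by (auto dest: injD)
  let ?F = "four_block_mat (submatrix C \<beta> \<beta>) (0\<^sub>m k (m-k)) (0\<^sub>m (m-k) k) (1\<^sub>m (m-k))"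
  have eq: "mat m m (\<lambda>(a,b). pad_principal m \<beta> C $$ (\<sigma> a, \<sigma> b)) = ?F"
  proof (rule eq_matI)
    fix a b assume "a < dim_row ?F" "b < dim_col ?F"
    then have a: "a < m" and b: "b < m" using km by (auto simp: ps)
    have \<sigma>ab: "\<sigma> a < m" "\<sigma> b < m" using a b \<sigma> by (auto simp: permutes_in_image)
    show "mat m m (\<lambda>(a,b). pad_principal m \<beta> C $$ (\<sigma> a, \<sigma> b)) $$ (a, b) = ?F $$ (a, b)"
    proof (cases "a < k"; cases "b < k")
      assume "a < k" "b < k" then show ?thesis
        using a b \<sigma>ab lo lo_in by (simp add: pad_principal_def ps)
    next
      assume "a < k" "\<not> b < k" then show ?thesis
        using a b \<sigma>ab lo_in[of a] hi[of b] by (auto simp: pad_principal_def ps)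
    next
      assume "\<not> a < k" "b < k" then show ?thesis
        using a b \<sigma>ab lo_in[of b] hi[of a] by (auto simp: pad_principal_def ps)
    next
      assume "\<not> a < k" "\<not> b < k" then show ?thesis
        using a b \<sigma>ab hi[of a] hi[of b] inj[of a b] by (auto simp: pad_principal_def ps)
    qed
  qed (auto simp: ps km)
  have "det (pad_principal m \<beta> C) = det (mat m m (\<lambda>(a,b). pad_principal m \<beta> C $$ (\<sigma> a, \<sigma> b)))"
    by (rule det_permute_rows_cols[OF pad_principal_carrier \<sigma>, symmetric])
  also have "\<dots> = det (submatrix C \<beta> \<beta>) * det (1\<^sub>m (m-k) :: 'a mat)"
    unfolding eq by (rule det_four_block_mat_lower_left_zero) (auto simp: ps)
  finally show ?thesis by simp
qed

lemma det_psub_eq_det_pad_principal: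
  assumes "C \<in> carrier_mat m m" and "\<beta> \<subseteq> {0..<m}"
  shows "det (psub C \<beta>) = det (pad_principal m \<beta> C)"
  unfolding psub_def using assms by (rule det_principal_submatrix_eq_det_pad)

lemma det_pad_principal_eq_0_of_rank_less:
  fixes C :: "'a :: field mat"
  assumes C: "C \<in> carrier_mat m m" and \<beta>: "\<beta> \<subseteq> {0..<m}" and r: "vec_space.rank m C < card \<beta>"
  shows "det (pad_principal m \<beta> C) = 0"
proof (rule ccontr)
  assume "det (pad_principal m \<beta> C) \<noteq> 0"
  then have "det (submatrix C \<beta> \<beta>) \<noteq> 0"
    using det_principal_submatrix_eq_det_pad[OF C \<beta>] by simp
  from vec_space.rank_gt_minor[OF C this]
  have "card {j. j < m \<and> j \<in> \<beta>} \<le> vec_space.rank m C" .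
  moreover have "{j. j < m \<and> j \<in> \<beta>} = \<beta>" using \<beta> by auto
  ultimately show False using r by simp
qed

lemma det_pad_principal_transpose:
  assumes "C \<in> carrier_mat m m"
  shows "det (pad_principal m \<beta> (transpose_mat C)) = det (pad_principal m \<beta> C)"
proof -
  have "pad_principal m \<beta> (transpose_mat C) = transpose_mat (pad_principal m \<beta> C)"
    using assms by (intro eq_matI) (auto simp: pad_principal_def)
  then show ?thesis by (metis det_transpose pad_principal_carrier)
qed


section \<open>Expansions in principal minors\<close>

lemma signof_prod_add_diag:
  fixes C :: "'a :: comm_ring_1 mat"
  assumes p: "p permutes {0..<m}" and S: "S \<subseteq> {0..<m}"
  shows "signof p * ((\<Prod>a\<in>S. if p a = a then d a else 0) * (\<Prod>a\<in>{0..<m} - S. C $$ (a, p a)))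
    = (\<Prod>a\<in>S. d a) * (signof p * (\<Prod>a\<in>{0..<m}. pad_principal m ({0..<m} - S) C $$ (a, p a)))"
proof (cases "\<forall>a\<in>S. p a = a")
  case True
  have pm: "\<And>a. a < m \<Longrightarrow> p a < m" using p by (simp add: permutes_in_image)
  have 1: "(\<Prod>a\<in>S. if p a = a then d a else 0) = (\<Prod>a\<in>S. d a)"
    using True by (intro prod.cong) auto
  have split: "(\<Prod>a\<in>{0..<m}. pad_principal m ({0..<m} - S) C $$ (a, p a)) =
     (\<Prod>a\<in>S. pad_principal m ({0..<m} - S) C $$ (a, p a))
     * (\<Prod>a\<in>{0..<m} - S. pad_principal m ({0..<m} - S) C $$ (a, p a))"
    using prod.subset_diff[OF S] by (simp add: mult.commute)
  have 2: "(\<Prod>a\<in>S. pad_principal m ({0..<m} - S) C $$ (a, p a)) = 1"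
    using True S by (intro prod.neutral) (auto simp: pad_principal_def)
  have 3: "(\<Prod>a\<in>{0..<m} - S. pad_principal m ({0..<m} - S) C $$ (a, p a))
      = (\<Prod>a\<in>{0..<m} - S. C $$ (a, p a))"
  proof (intro prod.cong refl)
    fix a assume a: "a \<in> {0..<m} - S"
    have "p a \<notin> S"
    proof
      assume "p a \<in> S"
      then have "p (p a) = p a" using True by auto
      then have "p a = a" using permutes_inj[OF p] by (auto dest: injD)
      then show False using a \<open>p a \<in> S\<close> by auto
    qed
    then show "pad_principal m ({0..<m} - S) C $$ (a, p a) = C $$ (a, p a)"
      using a pm[of a] by (auto simp: pad_principal_def)
  qed
  show ?thesis unfolding 1 split 2 3 by simp
next
  case False
  then obtain a where a: "a \<in> S" "p a \<noteq> a" by auto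
  have "finite S" using S finite_subset by blast
  then have 1: "(\<Prod>a\<in>S. if p a = a then d a else 0) = 0"
    using a by (intro prod_zero) auto
  have "a < m" "p a < m" using a S p by (auto simp: permutes_in_image)
  then have 2: "(\<Prod>a\<in>{0..<m}. pad_principal m ({0..<m} - S) C $$ (a, p a)) = 0"
    using a by (intro prod_zero) (auto intro!: bexI[of _ a] simp: pad_principal_def)
  show ?thesis unfolding 1 2 by simp
qed

lemma det_add_diag_mat:
  fixes C :: "'a :: comm_ring_1 mat"
  assumes C: "C \<in> carrier_mat m m"
  shows "det (C + mat m m (\<lambda>(a,b). if a = b then d a else 0)) =
    (\<Sum>\<beta>\<in>Pow {0..<m}. (\<Prod>a\<in>{0..<m} - \<beta>. d a) * det (pad_principal m \<beta> C))"
proof -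
  let ?U = "{0..<m}"
  let ?D = "mat m m (\<lambda>(a,b). if a = b then d a else 0)"
  have CD: "C + ?D \<in> carrier_mat m m" using C by auto
  have "det (C + ?D) = (\<Sum>p\<in>{p. p permutes ?U}. signof p * (\<Prod>a\<in>?U. (C + ?D) $$ (a, p a)))"
    by (rule det_def'[OF CD])
  also have "\<dots> = (\<Sum>p\<in>{p. p permutes ?U}. signof p * (\<Sum>S\<in>Pow ?U.
      (\<Prod>a\<in>S. if p a = a then d a else 0) * (\<Prod>a\<in>?U - S. C $$ (a, p a))))"
  proof (rule sum.cong[OF refl])
    fix p assume "p \<in> {p. p permutes ?U}"
    then have pm: "\<And>a. a < m \<Longrightarrow> p a < m" by (simp add: permutes_in_image)
    have "(\<Prod>a\<in>?U. (C + ?D) $$ (a, p a)) = (\<Prod>a\<in>?U. (if p a = a then d a else 0) + C $$ (a, p a))"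
      by (rule prod.cong[OF refl]) (use C pm in \<open>auto\<close>)
    also have "\<dots> = (\<Sum>S\<in>Pow ?U. (\<Prod>a\<in>S. if p a = a then d a else 0) * (\<Prod>a\<in>?U - S. C $$ (a, p a)))"
      by (rule prod_add) simp
    finally show "signof p * (\<Prod>a\<in>?U. (C + ?D) $$ (a, p a)) = signof p * (\<Sum>S\<in>Pow ?U.
      (\<Prod>a\<in>S. if p a = a then d a else 0) * (\<Prod>a\<in>?U - S. C $$ (a, p a)))" by simp
  qed
  also have "\<dots> = (\<Sum>p\<in>{p. p permutes ?U}. \<Sum>S\<in>Pow ?U.
      (\<Prod>a\<in>S. d a) * (signof p * (\<Prod>a\<in>?U. pad_principal m (?U - S) C $$ (a, p a))))"
    unfolding sum_distrib_left by (intro sum.cong refl signof_prod_add_diag) auto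
  also have "\<dots> = (\<Sum>S\<in>Pow ?U. \<Sum>p\<in>{p. p permutes ?U}.
      (\<Prod>a\<in>S. d a) * (signof p * (\<Prod>a\<in>?U. pad_principal m (?U - S) C $$ (a, p a))))"
    by (rule sum.swap)
  also have "\<dots> = (\<Sum>S\<in>Pow ?U. (\<Prod>a\<in>S. d a) * det (pad_principal m (?U - S) C))"
    unfolding sum_distrib_left[symmetric] by (subst det_def'[OF pad_principal_carrier]) simp
  also have "\<dots> = (\<Sum>\<beta>\<in>Pow ?U. (\<Prod>a\<in>?U - \<beta>. d a) * det (pad_principal m \<beta> C))"
    by (rule sum.reindex_bij_witness[of _ "\<lambda>\<beta>. ?U - \<beta>" "\<lambda>S. ?U - S"]) (auto simp: double_diff)
  finally show ?thesis .
qed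

lemma det_pad_principal_smult:
  fixes C :: "'a :: comm_ring_1 mat"
  assumes C: "C \<in> carrier_mat m m" and \<beta>: "\<beta> \<subseteq> {0..<m}"
  shows "det (pad_principal m \<beta> (s \<cdot>\<^sub>m C)) = s ^ card \<beta> * det (pad_principal m \<beta> C)"
proof -
  let ?U = "{0..<m}"
  have "det (pad_principal m \<beta> (s \<cdot>\<^sub>m C))
      = (\<Sum>p\<in>{p. p permutes ?U}. signof p * (\<Prod>a\<in>?U. pad_principal m \<beta> (s \<cdot>\<^sub>m C) $$ (a, p a)))"
    by (rule det_def'[OF pad_principal_carrier])
  also have "\<dots> = (\<Sum>p\<in>{p. p permutes ?U}.
      s ^ card \<beta> * (signof p * (\<Prod>a\<in>?U. pad_principal m \<beta> C $$ (a, p a))))"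
  proof (rule sum.cong[OF refl])
    fix p assume "p \<in> {p. p permutes ?U}"
    then have pm: "\<And>a. a < m \<Longrightarrow> p a < m" by (simp add: permutes_in_image)
    have "(\<Prod>a\<in>?U. pad_principal m \<beta> (s \<cdot>\<^sub>m C) $$ (a, p a))
        = (\<Prod>a\<in>?U. (if a \<in> \<beta> then s else 1) * pad_principal m \<beta> C $$ (a, p a))"
      by (rule prod.cong[OF refl]) (use C pm in \<open>auto simp: pad_principal_def\<close>)
    also have "\<dots> = (\<Prod>a\<in>?U. (if a \<in> \<beta> then s else 1)) * (\<Prod>a\<in>?U. pad_principal m \<beta> C $$ (a, p a))"
      by (rule prod.distrib)
    also have "(\<Prod>a\<in>?U. (if a \<in> \<beta> then s else 1)) = (\<Prod>a\<in>{a\<in>?U. a \<in> \<beta>}. s)"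
      by (rule prod.inter_filter[symmetric]) simp
    also have "{a\<in>?U. a \<in> \<beta>} = \<beta>" using \<beta> by auto
    finally show "signof p * (\<Prod>a\<in>?U. pad_principal m \<beta> (s \<cdot>\<^sub>m C) $$ (a, p a)) =
      s ^ card \<beta> * (signof p * (\<Prod>a\<in>?U. pad_principal m \<beta> C $$ (a, p a)))" by simp
  qed
  also have "\<dots> = s ^ card \<beta> * det (pad_principal m \<beta> C)"
    unfolding sum_distrib_left[symmetric] by (subst det_def'[OF pad_principal_carrier]) simp
  finally show ?thesis .
qed

lemma det_smult_add_scalar:
  fixes C :: "'a :: comm_ring_1 mat"
  assumes C: "C \<in> carrier_mat m m"
  shows "det (s \<cdot>\<^sub>m C + t \<cdot>\<^sub>m 1\<^sub>m m) =
    (\<Sum>\<beta>\<in>Pow {0..<m}. t ^ (m - card \<beta>) * (s ^ card \<beta> * det (pad_principal m \<beta> C)))"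
proof -
  have "s \<cdot>\<^sub>m C + t \<cdot>\<^sub>m 1\<^sub>m m = s \<cdot>\<^sub>m C + mat m m (\<lambda>(a,b). if a = b then (\<lambda>_. t) a else 0)"
    using C by (intro eq_matI) auto
  also have "det \<dots> = (\<Sum>\<beta>\<in>Pow {0..<m}. (\<Prod>a\<in>{0..<m} - \<beta>. t) * det (pad_principal m \<beta> (s \<cdot>\<^sub>m C)))"
    using C by (intro det_add_diag_mat) simp
  also have "\<dots> = (\<Sum>\<beta>\<in>Pow {0..<m}. t ^ (m - card \<beta>) * (s ^ card \<beta> * det (pad_principal m \<beta> C)))"
    using C by (intro sum.cong refl) (auto simp: card_Diff_subset finite_subset det_pad_principal_smult)
  finally show ?thesis .
qed

lemma poly_eqI_nonzero:
  fixes p q :: "'a :: {idom, ring_char_0} poly"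
  assumes "\<And>t. t \<noteq> 0 \<Longrightarrow> poly p t = poly q t"
  shows "p = q"
proof (rule ccontr)
  assume "p \<noteq> q"
  then have "finite {t. poly (p - q) t = 0}" by (intro poly_roots_finite) simp
  moreover have "UNIV - {0} \<subseteq> {t. poly (p - q) t = 0}" using assms by auto
  ultimately have "finite (UNIV - {0::'a})" using finite_subset by blast
  then show False using infinite_UNIV_char_0[where 'a='a] by simp
qed


section \<open>Cramer's rule in principal minors\<close>

lemma replace_col_carrier[simp]: "M \<in> carrier_mat m m \<Longrightarrow> replace_col M i c \<in> carrier_mat m m"
  unfolding replace_col_def by auto

lemma replace_col_eq_Determinant_replace_col: "replace_col M i c = Determinant.replace_col M c i"
  unfolding replace_col_def Determinant.replace_col_def ..

lemma det_replace_col_cofactor: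
  assumes W: "W \<in> carrier_mat m m" and y: "y \<in> carrier_vec m" and i: "i < m"
  shows "det (replace_col W i y) = (\<Sum>a<m. y $ a * cofactor W a i)"
proof -
  have R: "replace_col W i y \<in> carrier_mat m m" using W by simp
  have "det (replace_col W i y)
      = (\<Sum>a<m. replace_col W i y $$ (a, i) * cofactor (replace_col W i y) a i)"
    by (rule laplace_expansion_column[OF R i])
  also have "\<dots> = (\<Sum>a<m. y $ a * cofactor W a i)"
  proof (rule sum.cong[OF refl])
    fix a assume a: "a \<in> {..<m}"
    have "mat_delete (replace_col W i y) a i = mat_delete W a i"
      using W i by (intro eq_matI) (auto simp: mat_delete_def replace_col_def)
    then show "replace_col W i y $$ (a, i) * cofactor (replace_col W i y) a i = y $ a * cofactor W a i"
      using a W i by (simp add: cofactor_def replace_col_def)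
  qed
  finally show ?thesis .
qed

lemma det_replace_col_add_smult:
  assumes W: "W \<in> carrier_mat m m" and u: "u \<in> carrier_vec m" and v: "v \<in> carrier_vec m"
    and i: "i < m"
  shows "det (replace_col W i (u + t \<cdot>\<^sub>v v)) = det (replace_col W i u) + t * det (replace_col W i v)"
proof -
  have uv: "u + t \<cdot>\<^sub>v v \<in> carrier_vec m" using u v by auto
  show ?thesis
    unfolding det_replace_col_cofactor[OF W uv i] det_replace_col_cofactor[OF W u i]
      det_replace_col_cofactor[OF W v i]
    using u v by (auto simp: sum.distrib sum_distrib_left algebra_simps intro!: sum.cong)
qed

lemma prod_if_eq_zero:
  assumes \<beta>: "\<beta> \<subseteq> {0..<m}" and i: "i < m"
  shows "(\<Prod>a\<in>{0..<m} - \<beta>. if a = i then 0 else (t :: 'a :: comm_semiring_1))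
    = (if i \<in> \<beta> then t ^ (m - card \<beta>) else 0)"
proof (cases "i \<in> \<beta>")
  case True
  then have "(\<Prod>a\<in>{0..<m} - \<beta>. if a = i then 0 else t) = (\<Prod>a\<in>{0..<m} - \<beta>. t)"
    by (intro prod.cong) auto
  also have "\<dots> = t ^ (m - card \<beta>)"
    using card_Diff_subset[OF finite_subset[OF \<beta>] \<beta>] by simp
  finally show ?thesis using True by simp
next
  case False
  have "(\<Prod>a\<in>{0..<m} - \<beta>. if a = i then 0 else t) = 0"
    by (rule prod_zero) (use False i in auto)
  then show ?thesis using False by simp
qed

lemma smult_one_mult_mat_vec:
  assumes x: "(x :: 'a :: comm_ring_1 vec) \<in> carrier_vec m"
  shows "(t \<cdot>\<^sub>m 1\<^sub>m m) *\<^sub>v x = t \<cdot>\<^sub>v x"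
proof (rule eq_vecI)
  fix a assume "a < dim_vec (t \<cdot>\<^sub>v x)"
  then have am: "a < m" using x by simp
  have "((t \<cdot>\<^sub>m 1\<^sub>m m) *\<^sub>v x) $ a = (\<Sum>b\<in>{0..<m}. t * (if b = a then 1 else 0) * x $ b)"
    using am x by (auto simp: scalar_prod_def)
  also have "\<dots> = (\<Sum>b\<in>{0..<m}. if b = a then t * x $ b else 0)" by (intro sum.cong) auto
  also have "\<dots> = t * x $ a" using am by simp
  finally show "((t \<cdot>\<^sub>m 1\<^sub>m m) *\<^sub>v x) $ a = (t \<cdot>\<^sub>v x) $ a" using am x by simp
qed (use x in auto)

lemma cramer_shifted_principal_minors:
  fixes Z :: "complex mat" and x :: "complex vec"
  assumes Z: "Z \<in> carrier_mat m m" and x: "x \<in> carrier_vec m" and i: "i < m"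
  shows "(\<Sum>\<beta>\<in>Pow {0..<m}. if i \<in> \<beta>
        then t ^ (m - card \<beta>) * det (pad_principal m \<beta> (replace_col Z i (Z *\<^sub>v x)))
           + t ^ (m - card \<beta> + 1) * det (pad_principal m \<beta> (replace_col Z i x))
        else 0)
    = x $ i * (\<Sum>\<beta>\<in>Pow {0..<m}. t ^ (m - card \<beta>) * det (pad_principal m \<beta> Z))"
proof -
  let ?U = "{0..<m}"
  let ?Zt = "Z + t \<cdot>\<^sub>m 1\<^sub>m m"
  let ?D = "mat m m (\<lambda>(a,b). if a = b then (if a = i then 0 else t) else 0)"
  have Zt: "?Zt \<in> carrier_mat m m" using Z by auto
  have Zx: "Z *\<^sub>v x \<in> carrier_vec m" using Z x by auto
  have expand: "det (replace_col ?Zt i y) = (\<Sum>\<beta>\<in>Pow ?U.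
      (if i \<in> \<beta> then t ^ (m - card \<beta>) else 0) * det (pad_principal m \<beta> (replace_col Z i y)))"
    if "y \<in> carrier_vec m" for y
  proof -
    have rc: "replace_col ?Zt i y = replace_col Z i y + ?D"
      using Z by (intro eq_matI) (auto simp: replace_col_def)
    show ?thesis
      unfolding rc using Z i by (subst det_add_diag_mat) (auto intro!: sum.cong simp: prod_if_eq_zero)
  qed
  have "?Zt *\<^sub>v x = Z *\<^sub>v x + t \<cdot>\<^sub>v x"
    using Z x by (simp add: add_mult_distrib_mat_vec[OF Z _ x] smult_one_mult_mat_vec)
  then have "det (replace_col ?Zt i (Z *\<^sub>v x)) + t * det (replace_col ?Zt i x)
      = det (replace_col ?Zt i (?Zt *\<^sub>v x))"
    using det_replace_col_add_smult[OF Zt Zx x i] by simp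
  also have "\<dots> = x $ i * det ?Zt"
    using cramer_lemma_mat[OF Zt x i] unfolding replace_col_eq_Determinant_replace_col .
  finally have cramer: "det (replace_col ?Zt i (Z *\<^sub>v x)) + t * det (replace_col ?Zt i x)
      = x $ i * det ?Zt" .
  have "1 \<cdot>\<^sub>m Z = Z" using Z by (intro eq_matI) auto
  then have det_Zt: "det ?Zt = (\<Sum>\<beta>\<in>Pow ?U. t ^ (m - card \<beta>) * det (pad_principal m \<beta> Z))"
    using det_smult_add_scalar[OF Z, of 1 t] by simp
  have "(\<Sum>\<beta>\<in>Pow ?U. if i \<in> \<beta>
        then t ^ (m - card \<beta>) * det (pad_principal m \<beta> (replace_col Z i (Z *\<^sub>v x)))
           + t ^ (m - card \<beta> + 1) * det (pad_principal m \<beta> (replace_col Z i x))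
        else 0)
      = det (replace_col ?Zt i (Z *\<^sub>v x)) + t * det (replace_col ?Zt i x)"
    unfolding expand[OF Zx] expand[OF x] sum_distrib_left sum.distrib[symmetric]
    by (intro sum.cong) (auto simp: algebra_simps)
  then show ?thesis unfolding cramer det_Zt .
qed

text \<open>Compare the coefficients of \<open>t ^ (m - s)\<close> in \<open>cramer_shifted_principal_minors\<close>; the
  hypothesis removes the minors of order \<open>s + 1\<close> with column \<open>i\<close> replaced by \<open>x\<close>.\<close>
lemma sum_principal_minors_replace_col_mult_vec:
  fixes Z :: "complex mat" and x :: "complex vec"
  assumes Z: "Z \<in> carrier_mat m m" and x: "x \<in> carrier_vec m" and i: "i < m" and s: "s \<le> m"
    and van: "\<And>\<beta>. \<beta> \<in> Lset (Suc s) m \<Longrightarrow> i \<in> \<beta> \<Longrightarrow> det (pad_principal m \<beta> (replace_col Z i x)) = 0"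
  shows "(\<Sum>\<beta>\<in>{\<beta>\<in>Lset s m. i \<in> \<beta>}. det (pad_principal m \<beta> (replace_col Z i (Z *\<^sub>v x))))
     = x $ i * (\<Sum>\<beta>\<in>Lset s m. det (pad_principal m \<beta> Z))"
proof -
  let ?U = "{0..<m}"
  define nA where "nA \<beta> = det (pad_principal m \<beta> (replace_col Z i (Z *\<^sub>v x)))" for \<beta>
  define nB where "nB \<beta> = det (pad_principal m \<beta> (replace_col Z i x))" for \<beta>
  define cZ where "cZ \<beta> = det (pad_principal m \<beta> Z)" for \<beta>
  define PL where "PL = (\<Sum>\<beta>\<in>Pow ?U.
    if i \<in> \<beta> then monom (nA \<beta>) (m - card \<beta>) + monom (nB \<beta>) (m - card \<beta> + 1) else 0)"
  define PR where "PR = (\<Sum>\<beta>\<in>Pow ?U. monom (x $ i * cZ \<beta>) (m - card \<beta>))"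
  have card_le: "card \<beta> \<le> m" if "\<beta> \<in> Pow ?U" for \<beta>
    using card_mono[of ?U] that by fastforce
  have "poly PL t = poly PR t" for t
  proof -
    have "poly PL t = (\<Sum>\<beta>\<in>Pow ?U. if i \<in> \<beta>
        then t ^ (m - card \<beta>) * nA \<beta> + t ^ (m - card \<beta> + 1) * nB \<beta> else 0)"
      unfolding PL_def poly_sum by (intro sum.cong) (auto simp: poly_monom ac_simps)
    also have "\<dots> = x $ i * (\<Sum>\<beta>\<in>Pow ?U. t ^ (m - card \<beta>) * cZ \<beta>)"
      unfolding nA_def nB_def cZ_def by (rule cramer_shifted_principal_minors[OF Z x i])
    also have "\<dots> = poly PR t"
      unfolding PR_def poly_sum sum_distrib_left by (intro sum.cong) (auto simp: poly_monom ac_simps)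
    finally show ?thesis .
  qed
  then have "PL = PR" using poly_eq_poly_eq_iff by blast
  moreover have "coeff PL (m - s) = (\<Sum>\<beta>\<in>{\<beta>\<in>Lset s m. i \<in> \<beta>}. nA \<beta>)"
  proof -
    have "coeff PL (m - s) = (\<Sum>\<beta>\<in>Pow ?U. (if i \<in> \<beta> \<and> card \<beta> = s then nA \<beta> else 0)
       + (if i \<in> \<beta> \<and> card \<beta> = Suc s then nB \<beta> else 0))"
      unfolding PL_def coeff_sum
    proof (intro sum.cong refl)
      fix \<beta> assume "\<beta> \<in> Pow ?U"
      then show "coeff (if i \<in> \<beta> then monom (nA \<beta>) (m - card \<beta>) + monom (nB \<beta>) (m - card \<beta> + 1)
          else 0) (m - s) = (if i \<in> \<beta> \<and> card \<beta> = s then nA \<beta> else 0)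
          + (if i \<in> \<beta> \<and> card \<beta> = Suc s then nB \<beta> else 0)"
        using card_le[of \<beta>] s by (auto simp: coeff_monom)
    qed
    also have "\<dots> = (\<Sum>\<beta>\<in>Pow ?U. if i \<in> \<beta> \<and> card \<beta> = s then nA \<beta> else 0)"
      unfolding sum.distrib using van by (auto simp: nB_def Lset_def intro!: sum.neutral)
    also have "\<dots> = (\<Sum>\<beta>\<in>{\<beta>\<in>Lset s m. i \<in> \<beta>}. nA \<beta>)"
      by (subst sum.inter_filter[symmetric]) (auto simp: Lset_def intro!: sum.cong)
    finally show ?thesis .
  qed
  moreover have "coeff PR (m - s) = x $ i * (\<Sum>\<beta>\<in>Lset s m. cZ \<beta>)"
  proof -
    have "coeff PR (m - s) = (\<Sum>\<beta>\<in>Pow ?U. if card \<beta> = s then x $ i * cZ \<beta> else 0)"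
      unfolding PR_def coeff_sum
    proof (intro sum.cong refl)
      fix \<beta> assume "\<beta> \<in> Pow ?U"
      then show "coeff (monom (x $ i * cZ \<beta>) (m - card \<beta>)) (m - s)
          = (if card \<beta> = s then x $ i * cZ \<beta> else 0)"
        using card_le[of \<beta>] s by (auto simp: coeff_monom)
    qed
    also have "\<dots> = (\<Sum>\<beta>\<in>Lset s m. x $ i * cZ \<beta>)"
      by (subst sum.inter_filter[symmetric]) (auto simp: Lset_def intro!: sum.cong)
    finally show ?thesis by (simp add: sum_distrib_left)
  qed
  ultimately show ?thesis unfolding nA_def cZ_def by simp
qed


section \<open>Group inverses\<close>

definition group_inverse :: "'a :: semiring_1 mat \<Rightarrow> 'a mat \<Rightarrow> bool" where
  "group_inverse B G \<longleftrightarrow> B * G * B = B \<and> G * B * G = G \<and> B * G = G * B"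

lemma poly_eq_monom_one_of_degree_le:
  fixes p q :: "'a :: idom poly"
  assumes deg: "degree p \<le> d" and pq: "p = monom 1 d * q" and p1: "poly p 1 = 1"
  shows "p = monom 1 d"
proof -
  have "q \<noteq> 0" using p1 pq by auto
  then have "degree p = d + degree q" unfolding pq by (subst degree_mult_eq) (auto simp: degree_monom_eq)
  then have "degree q = 0" using deg by simp
  then obtain a where q: "q = [:a:]" by (rule degree_eq_zeroE)
  have "a = 1" using p1 unfolding pq q by (simp add: poly_monom)
  then show ?thesis unfolding pq q by simp
qed

lemma degree_sum_minors_shift_le:
  fixes C :: "complex mat"
  assumes C: "C \<in> carrier_mat m m" and rank: "vec_space.rank m C \<le> d"
  shows "degree (\<Sum>\<beta>\<in>Pow {0..<m}. Polynomial.smult (det (pad_principal m \<beta> C)) ([:-1,1:] ^ card \<beta>)) \<le> d"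
proof (intro degree_sum_le)
  fix \<beta> assume \<beta>: "\<beta> \<in> Pow {0..<m}"
  show "degree (Polynomial.smult (det (pad_principal m \<beta> C)) ([:-1,1:] ^ card \<beta>)) \<le> d"
  proof (cases "d < card \<beta>")
    case True
    then show ?thesis using \<beta> rank det_pad_principal_eq_0_of_rank_less[OF C] by simp
  next
    case False
    have "degree (Polynomial.smult (det (pad_principal m \<beta> C)) ([:-1,1:] ^ card \<beta>))
        \<le> degree ([:-1,1:] ^ card \<beta> :: complex poly)" by (rule degree_smult_le)
    also have "\<dots> \<le> degree [:-1,1::complex:] * card \<beta>" by (rule degree_power_le)
    finally show ?thesis using False by simp
  qed
qed simp

text \<open>Expanding the determinant once around \<open>P\<close> and once around \<open>1 - P\<close> shows that it is a polynomial
  in \<open>t\<close> of degree at most \<open>m - rank P\<close> that is divisible by \<open>t ^ (m - rank P)\<close>.\<close>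
lemma det_idempotent_pencil:
  fixes P :: "complex mat"
  assumes P: "P \<in> carrier_mat m m" and PP: "P * P = P"
  shows "det (P + t \<cdot>\<^sub>m (1\<^sub>m m - P)) = t ^ (m - vec_space.rank m P)"
proof -
  let ?U = "{0..<m}"
  define r where "r = vec_space.rank m P"
  define E where "E = 1\<^sub>m m - P"
  have E: "E \<in> carrier_mat m m" unfolding E_def using P by (simp add: minus_carrier_mat)
  have rm: "r \<le> m" unfolding r_def using vec_space.rank_le_nc[OF P] .
  have "P * E = 0\<^sub>m m m" unfolding E_def using PP P
    by (simp add: right_mult_one_mat[OF P] mult_minus_distrib_mat[where nr=m and n=m and nc=m])
  then have rE: "vec_space.rank m E \<le> m - r"
    using rank_add_rank_le_of_mult_zero[OF P E] unfolding r_def by simp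
  define Fp where "Fp = (\<Sum>\<beta>\<in>Pow ?U. Polynomial.smult (det (pad_principal m \<beta> E)) ([:-1,1:] ^ card \<beta>))"
  define Gp where "Gp = (\<Sum>\<beta>\<in>Pow ?U. Polynomial.smult (det (pad_principal m \<beta> P))
    ([:0,1:] ^ (r - card \<beta>) * [:1,-1:] ^ card \<beta>))"
  have poly_Fp: "poly Fp t = det (P + t \<cdot>\<^sub>m E)" for t
  proof -
    have eq: "P + t \<cdot>\<^sub>m E = (t - 1) \<cdot>\<^sub>m E + 1 \<cdot>\<^sub>m 1\<^sub>m m"
      unfolding E_def using P by (intro eq_matI) (auto simp: algebra_simps)
    show ?thesis
      unfolding Fp_def poly_sum eq det_smult_add_scalar[OF E] by (intro sum.cong) (auto simp: algebra_simps)
  qed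
  have "degree Fp \<le> m - r" unfolding Fp_def by (rule degree_sum_minors_shift_le[OF E rE])
  moreover have "Fp = monom 1 (m - r) * Gp"
  proof (rule poly_eq_poly_eq_iff[THEN iffD1], rule ext)
    fix t
    have eq: "P + t \<cdot>\<^sub>m E = (1 - t) \<cdot>\<^sub>m P + t \<cdot>\<^sub>m 1\<^sub>m m"
      unfolding E_def using P by (intro eq_matI) (auto simp: algebra_simps)
    have "poly Fp t = (\<Sum>\<beta>\<in>Pow ?U. t ^ (m - card \<beta>) * ((1 - t) ^ card \<beta> * det (pad_principal m \<beta> P)))"
      unfolding poly_Fp eq det_smult_add_scalar[OF P] ..
    also have "\<dots> = (\<Sum>\<beta>\<in>Pow ?U. t ^ (m - r) *
        (det (pad_principal m \<beta> P) * (t ^ (r - card \<beta>) * (1 - t) ^ card \<beta>)))"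
    proof (intro sum.cong refl)
      fix \<beta> assume \<beta>: "\<beta> \<in> Pow ?U"
      show "t ^ (m - card \<beta>) * ((1 - t) ^ card \<beta> * det (pad_principal m \<beta> P))
        = t ^ (m - r) * (det (pad_principal m \<beta> P) * (t ^ (r - card \<beta>) * (1 - t) ^ card \<beta>))"
      proof (cases "r < card \<beta>")
        case True
        then show ?thesis using \<beta> det_pad_principal_eq_0_of_rank_less[OF P] unfolding r_def by simp
      next
        case False
        then have "m - card \<beta> = (m - r) + (r - card \<beta>)" using rm by simp
        then show ?thesis by (simp add: power_add algebra_simps)
      qed
    qed
    also have "\<dots> = poly (monom 1 (m - r) * Gp) t"
      unfolding Gp_def poly_mult poly_monom poly_sum sum_distrib_left
      by (intro sum.cong refl) (simp add: algebra_simps)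
    finally show "poly Fp t = poly (monom 1 (m - r) * Gp) t" .
  qed
  moreover have "poly Fp 1 = 1"
  proof -
    have "P + 1 \<cdot>\<^sub>m E = 1\<^sub>m m" unfolding E_def using P by (intro eq_matI) auto
    then show ?thesis unfolding poly_Fp by simp
  qed
  ultimately have "Fp = monom 1 (m - r)" by (rule poly_eq_monom_one_of_degree_le)
  then show ?thesis using poly_Fp[of t] unfolding E_def r_def by (simp add: poly_monom)
qed

lemma idempotent_pencil_factorization:
  fixes B P :: "complex mat"
  assumes B: "B \<in> carrier_mat m m" and P: "P \<in> carrier_mat m m"
    and PP: "P * P = P" and PB: "P * B = B" and BP: "B * P = B"
  shows "(P + t \<cdot>\<^sub>m (1\<^sub>m m - P)) * ((1\<^sub>m m - P + B) + t \<cdot>\<^sub>m P) = t \<cdot>\<^sub>m 1\<^sub>m m + B"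
proof -
  define E where "E = 1\<^sub>m m - P"
  have E: "E \<in> carrier_mat m m" unfolding E_def using P by (simp add: minus_carrier_mat)
  have PE: "P * E = 0\<^sub>m m m" unfolding E_def using PP P
    by (simp add: right_mult_one_mat[OF P] mult_minus_distrib_mat[where nr=m and n=m and nc=m])
  have EP: "E * P = 0\<^sub>m m m" unfolding E_def using PP P
    by (simp add: left_mult_one_mat[OF P] minus_mult_distrib_mat[where nr=m and n=m and nc=m])
  have "E - 0\<^sub>m m m = E" using E by (intro eq_matI) auto
  then have EE: "E * E = E"
    using mult_minus_distrib_mat[OF E one_carrier_mat P] EP E
    unfolding E_def[symmetric] by (simp add: right_mult_one_mat[OF E])
  have EB: "E * B = 0\<^sub>m m m" unfolding E_def using PB B P
    by (simp add: left_mult_one_mat[OF B] minus_mult_distrib_mat[where nr=m and n=m and nc=m])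
  have "(P + t \<cdot>\<^sub>m E) * ((E + B) + t \<cdot>\<^sub>m P) =
     P * E + t \<cdot>\<^sub>m (E * E) + (P * B + t \<cdot>\<^sub>m (E * B) + t \<cdot>\<^sub>m (P * P + t \<cdot>\<^sub>m (E * P)))"
    using B P E
    by (simp add: add_mult_distrib_mat[where nr=m and n=m and nc=m]
      mult_add_distrib_mat[where nr=m and n=m and nc=m] mult_smult_distrib[where nr=m and n=m and nc=m]
      mult_smult_assoc_mat[where nr=m and n=m and nc=m])
  also have "\<dots> = t \<cdot>\<^sub>m 1\<^sub>m m + B"
    unfolding PE EP EE EB PP PB unfolding E_def
    using carrier_matD[OF B] carrier_matD[OF P] by (intro eq_matI) (auto simp: algebra_simps)
  finally show ?thesis unfolding E_def .
qed

lemma group_inverse_shift_inverse: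
  fixes B G :: "complex mat"
  assumes B: "B \<in> carrier_mat m m" and G: "G \<in> carrier_mat m m" and BG: "group_inverse B G"
  shows "(1\<^sub>m m - B * G + B) * (1\<^sub>m m - B * G + G) = 1\<^sub>m m"
proof -
  define P where "P = B * G"
  define E where "E = 1\<^sub>m m - P"
  have P: "P \<in> carrier_mat m m" unfolding P_def using B G by simp
  have E: "E \<in> carrier_mat m m" unfolding E_def using P by (simp add: minus_carrier_mat)
  from BG have BGB: "B * G * B = B" and GBG: "G * B * G = G" and comm: "B * G = G * B"
    unfolding group_inverse_def by auto
  have PP: "P * P = P" unfolding P_def using BGB assoc_mult_mat[OF P[unfolded P_def] B G, symmetric] by simp
  have PG: "P * G = G" unfolding P_def using GBG comm B G by (metis assoc_mult_mat)
  have BP: "B * P = B" unfolding P_def using BGB comm B G by (metis assoc_mult_mat)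
  have EE: "E * E = E"
  proof -
    have "E * P = 0\<^sub>m m m" unfolding E_def using PP P
      by (simp add: left_mult_one_mat[OF P] minus_mult_distrib_mat[where nr=m and n=m and nc=m])
    moreover have "E - 0\<^sub>m m m = E" using E by (intro eq_matI) auto
    ultimately show ?thesis
      using mult_minus_distrib_mat[OF E one_carrier_mat P] E
      unfolding E_def[symmetric] by (simp add: right_mult_one_mat[OF E])
  qed
  have EG: "E * G = 0\<^sub>m m m" unfolding E_def using PG P G
    by (simp add: left_mult_one_mat[OF G] minus_mult_distrib_mat[where nr=m and n=m and nc=m])
  have BE: "B * E = 0\<^sub>m m m" unfolding E_def using BP B P
    by (simp add: right_mult_one_mat[OF B] mult_minus_distrib_mat[where nr=m and n=m and nc=m])
  have "(E + B) * (E + G) = E * E + B * E + (E * G + B * G)"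
    using B G E by (simp add: add_mult_distrib_mat[where nr=m and n=m and nc=m]
      mult_add_distrib_mat[where nr=m and n=m and nc=m])
  also have "\<dots> = 1\<^sub>m m"
    unfolding EE EG BE P_def[symmetric] unfolding E_def
    using carrier_matD[OF P] by (intro eq_matI) auto
  finally show ?thesis unfolding E_def P_def .
qed

definition principal_minor_poly :: "nat \<Rightarrow> nat \<Rightarrow> 'a :: comm_ring_1 mat \<Rightarrow> 'a poly" where
  "principal_minor_poly m r C = (\<Sum>\<beta>\<in>Pow {0..<m}. monom (det (pad_principal m \<beta> C)) (r - card \<beta>))"

lemma det_add_scalar_principal_minor_poly:
  fixes C :: "complex mat"
  assumes C: "C \<in> carrier_mat m m" and rank: "vec_space.rank m C \<le> r" and rm: "r \<le> m"
  shows "det (t \<cdot>\<^sub>m 1\<^sub>m m + C) = t ^ (m - r) * poly (principal_minor_poly m r C) t"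
proof -
  have "t ^ (m - r) * poly (principal_minor_poly m r C) t
      = (\<Sum>\<beta>\<in>Pow {0..<m}. t ^ (m - card \<beta>) * (1 ^ card \<beta> * det (pad_principal m \<beta> C)))"
    unfolding principal_minor_poly_def poly_sum sum_distrib_left
  proof (intro sum.cong refl)
    fix \<beta> assume \<beta>: "\<beta> \<in> Pow {0..<m}"
    show "t ^ (m - r) * poly (monom (det (pad_principal m \<beta> C)) (r - card \<beta>)) t
        = t ^ (m - card \<beta>) * (1 ^ card \<beta> * det (pad_principal m \<beta> C))"
    proof (cases "r < card \<beta>")
      case True
      then show ?thesis using \<beta> rank det_pad_principal_eq_0_of_rank_less[OF C] by simp
    next
      case False
      then have "m - card \<beta> = (m - r) + (r - card \<beta>)" using rm by simp
      then show ?thesis by (simp add: power_add poly_monom algebra_simps)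
    qed
  qed
  also have "\<dots> = det (1 \<cdot>\<^sub>m C + t \<cdot>\<^sub>m 1\<^sub>m m)" by (rule det_smult_add_scalar[OF C, symmetric])
  also have "1 \<cdot>\<^sub>m C + t \<cdot>\<^sub>m 1\<^sub>m m = t \<cdot>\<^sub>m 1\<^sub>m m + C" using C by (intro eq_matI) auto
  finally show ?thesis ..
qed

lemma poly_principal_minor_poly_0:
  fixes C :: "complex mat"
  assumes C: "C \<in> carrier_mat m m" and rank: "vec_space.rank m C \<le> r"
  shows "poly (principal_minor_poly m r C) 0 = (\<Sum>\<beta>\<in>Lset r m. det (pad_principal m \<beta> C))"
proof -
  have "poly (principal_minor_poly m r C) 0
      = (\<Sum>\<beta>\<in>Pow {0..<m}. if card \<beta> = r then det (pad_principal m \<beta> C) else 0)"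
    unfolding principal_minor_poly_def poly_sum
  proof (intro sum.cong refl)
    fix \<beta> assume \<beta>: "\<beta> \<in> Pow {0..<m}"
    show "poly (monom (det (pad_principal m \<beta> C)) (r - card \<beta>)) 0
        = (if card \<beta> = r then det (pad_principal m \<beta> C) else 0)"
      using \<beta> rank det_pad_principal_eq_0_of_rank_less[OF C, of \<beta>]
      by (cases "r < card \<beta>") (auto simp: poly_monom)
  qed
  also have "\<dots> = (\<Sum>\<beta>\<in>Lset r m. det (pad_principal m \<beta> C))"
    by (subst sum.inter_filter[symmetric]) (auto simp: Lset_def intro!: sum.cong)
  finally show ?thesis .
qed

lemma sum_principal_minors_group_inverse_neq_0:
  fixes B G :: "complex mat"
  assumes B: "B \<in> carrier_mat m m" and G: "G \<in> carrier_mat m m" and BG: "group_inverse B G"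
  shows "(\<Sum>\<beta>\<in>Lset (vec_space.rank m B) m. det (pad_principal m \<beta> B)) \<noteq> 0"
proof -
  define r where "r = vec_space.rank m B"
  define P where "P = B * G"
  define Q where "Q = 1\<^sub>m m - P + B"
  have P: "P \<in> carrier_mat m m" unfolding P_def using B G by simp
  have Q: "Q \<in> carrier_mat m m" unfolding Q_def using P B by simp
  from BG have BGB: "B * G * B = B" and comm: "B * G = G * B" unfolding group_inverse_def by auto
  have PP: "P * P = P" unfolding P_def using BGB assoc_mult_mat[OF P[unfolded P_def] B G, symmetric] by simp
  have PB: "P * B = B" unfolding P_def using BGB .
  have BP: "B * P = B" unfolding P_def using BGB comm B G by (metis assoc_mult_mat)
  have rm: "r \<le> m" unfolding r_def using vec_space.rank_le_nc[OF B] .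
  have "vec_space.rank m B \<le> vec_space.rank m P" using rank_mult_le_left[OF P B] PB by simp
  moreover have "vec_space.rank m P \<le> vec_space.rank m B"
    using rank_mult_le_left[OF B G] unfolding P_def .
  ultimately have rP: "vec_space.rank m P = r" unfolding r_def by simp
  define Hp where "Hp = det (mat m m (\<lambda>(a,b). [:Q $$ (a,b), P $$ (a,b):]))"
  have poly_Hp: "poly Hp t = det (Q + t \<cdot>\<^sub>m P)" for t
    unfolding Hp_def by (rule poly_det_cong[of _ m]) (use Q P in auto)
  have shifted: "t ^ (m - r) * poly (principal_minor_poly m r B) t = t ^ (m - r) * poly Hp t" for t
  proof -
    have "t ^ (m - r) * poly (principal_minor_poly m r B) t = det (t \<cdot>\<^sub>m 1\<^sub>m m + B)"
      using det_add_scalar_principal_minor_poly[OF B _ rm] unfolding r_def by simp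
    also have "t \<cdot>\<^sub>m 1\<^sub>m m + B = (P + t \<cdot>\<^sub>m (1\<^sub>m m - P)) * (Q + t \<cdot>\<^sub>m P)"
      unfolding Q_def by (rule idempotent_pencil_factorization[OF B P PP PB BP, symmetric])
    also have "det \<dots> = det (P + t \<cdot>\<^sub>m (1\<^sub>m m - P)) * det (Q + t \<cdot>\<^sub>m P)"
      by (rule det_mult[of _ m]) (use P Q in \<open>auto simp: minus_carrier_mat\<close>)
    also have "\<dots> = t ^ (m - r) * poly Hp t"
      unfolding det_idempotent_pencil[OF P PP] rP poly_Hp ..
    finally show ?thesis .
  qed
  have "principal_minor_poly m r B = Hp"
  proof (rule poly_eqI_nonzero)
    fix t :: complex assume "t \<noteq> 0"
    then show "poly (principal_minor_poly m r B) t = poly Hp t" using shifted[of t] by simp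
  qed
  then have "(\<Sum>\<beta>\<in>Lset r m. det (pad_principal m \<beta> B)) = poly Hp 0"
    using poly_principal_minor_poly_0[OF B order.refl] unfolding r_def by simp
  also have "\<dots> = det Q"
  proof -
    have "Q + 0 \<cdot>\<^sub>m P = Q" using Q P by (intro eq_matI) auto
    then show ?thesis unfolding poly_Hp by simp
  qed
  finally show ?thesis
    using group_inverse_shift_inverse[OF B G BG] det_mult[of Q m "1\<^sub>m m - B * G + G"] Q G
    unfolding Q_def P_def r_def by auto
qed


section \<open>Cramer's rule for group invertible matrices\<close>

lemma replace_col_mult_vec:
  fixes B :: "complex mat"
  assumes B: "B \<in> carrier_mat m m" and z: "z \<in> carrier_vec m" and i: "i < m"
  shows "replace_col B i (B *\<^sub>v z) = B * replace_col (1\<^sub>m m) i z"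
proof (rule eq_matI)
  fix a b assume a: "a < dim_row (B * replace_col (1\<^sub>m m) i z)"
    and b: "b < dim_col (B * replace_col (1\<^sub>m m) i z)"
  have a': "a < m" and b': "b < m" using a b B by (auto simp: replace_col_def)
  have "col (replace_col (1\<^sub>m m) i z) b = (if b = i then z else unit_vec m b)"
    using b' z by (intro eq_vecI) (auto simp: replace_col_def unit_vec_def)
  then show "replace_col B i (B *\<^sub>v z) $$ (a, b) = (B * replace_col (1\<^sub>m m) i z) $$ (a, b)"
    using a' b' B z by (auto simp: replace_col_def)
qed (use B in \<open>auto simp: replace_col_def\<close>)

lemma replace_row_eq_transpose_replace_col:
  assumes "Z \<in> carrier_mat n n"
  shows "replace_row Z j u = transpose_mat (replace_col (transpose_mat Z) j u)"
  using assms by (intro eq_matI) (auto simp: replace_row_def replace_col_def)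

lemma row_mult_eq_transpose_mult_vec:
  fixes A B :: "'a :: comm_semiring_0 mat"
  assumes A: "A \<in> carrier_mat a b" and B: "B \<in> carrier_mat b c" and i: "i < a"
  shows "row (A * B) i = transpose_mat B *\<^sub>v row A i"
  using A B i by (intro eq_vecI) (auto simp: row_mult comm_scalar_prod[of _ b])

lemma det_pad_replace_col_range_eq_0:
  fixes B :: "complex mat"
  assumes B: "B \<in> carrier_mat m m" and z: "z \<in> carrier_vec m" and i: "i < m"
    and \<beta>: "\<beta> \<subseteq> {0..<m}" and r: "vec_space.rank m B < card \<beta>"
  shows "det (pad_principal m \<beta> (replace_col B i (B *\<^sub>v z))) = 0"
proof -
  have R: "replace_col (1\<^sub>m m) i z \<in> carrier_mat m m" by simp
  have "vec_space.rank m (B * replace_col (1\<^sub>m m) i z) < card \<beta>"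
    using rank_mult_le_left[OF B R] r by simp
  then show ?thesis unfolding replace_col_mult_vec[OF B z i]
    using \<beta> by (intro det_pad_principal_eq_0_of_rank_less) (use B in auto)
qed

lemma det_pad_replace_row_range_eq_0:
  fixes B :: "complex mat"
  assumes B: "B \<in> carrier_mat m m" and z: "z \<in> carrier_vec m" and j: "j < m"
    and \<beta>: "\<beta> \<subseteq> {0..<m}" and r: "vec_space.rank m B < card \<beta>"
  shows "det (pad_principal m \<beta> (replace_row B j (transpose_mat B *\<^sub>v z))) = 0"
proof -
  define R where "R = replace_col (1\<^sub>m m) j z"
  have R: "R \<in> carrier_mat m m" unfolding R_def by simp
  have BT: "transpose_mat B \<in> carrier_mat m m" using B by simp
  have "replace_row B j (transpose_mat B *\<^sub>v z) = transpose_mat (transpose_mat B * R)"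
    unfolding replace_row_eq_transpose_replace_col[OF B] R_def replace_col_mult_vec[OF BT z j] ..
  also have "\<dots> = transpose_mat R * B" using transpose_mult[OF BT R] by simp
  finally have eq: "replace_row B j (transpose_mat B *\<^sub>v z) = transpose_mat R * B" .
  have RT: "transpose_mat R \<in> carrier_mat m m" using R by simp
  have "vec_space.rank m (transpose_mat R * B) < card \<beta>"
    using rank_mult_le_right[OF RT B] r by simp
  then show ?thesis unfolding eq
    using \<beta> by (intro det_pad_principal_eq_0_of_rank_less) (use B R in auto)
qed

lemma group_inverse_cramer_col:
  fixes B G :: "complex mat"
  assumes B: "B \<in> carrier_mat m m" and G: "G \<in> carrier_mat m m" and BG: "group_inverse B G"
    and z: "z \<in> carrier_vec m" and x: "x = B *\<^sub>v z" and i: "i < m"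
  shows "x $ i =
    (\<Sum>\<beta>\<in>{\<beta>\<in>Lset (vec_space.rank m B) m. i \<in> \<beta>}. det (psub (replace_col B i (B *\<^sub>v x)) \<beta>))
    / (\<Sum>\<beta>\<in>Lset (vec_space.rank m B) m. det (psub B \<beta>))"
proof -
  let ?r = "vec_space.rank m B"
  have xc: "x \<in> carrier_vec m" unfolding x using B z by simp
  have "(\<Sum>\<beta>\<in>{\<beta>\<in>Lset ?r m. i \<in> \<beta>}. det (psub (replace_col B i (B *\<^sub>v x)) \<beta>))
      = (\<Sum>\<beta>\<in>{\<beta>\<in>Lset ?r m. i \<in> \<beta>}. det (pad_principal m \<beta> (replace_col B i (B *\<^sub>v x))))"
    using B by (intro sum.cong refl det_psub_eq_det_pad_principal) (auto simp: Lset_def)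
  also have "\<dots> = x $ i * (\<Sum>\<beta>\<in>Lset ?r m. det (pad_principal m \<beta> B))"
  proof (rule sum_principal_minors_replace_col_mult_vec[OF B xc i vec_space.rank_le_nc[OF B]])
    fix \<beta> assume "\<beta> \<in> Lset (Suc ?r) m"
    then show "det (pad_principal m \<beta> (replace_col B i x)) = 0"
      unfolding x using det_pad_replace_col_range_eq_0[OF B z i] by (simp add: Lset_def)
  qed
  also have "(\<Sum>\<beta>\<in>Lset ?r m. det (pad_principal m \<beta> B)) = (\<Sum>\<beta>\<in>Lset ?r m. det (psub B \<beta>))"
    using B by (intro sum.cong refl det_psub_eq_det_pad_principal[symmetric]) (auto simp: Lset_def)
  finally show ?thesis
    using sum_principal_minors_group_inverse_neq_0[OF B G BG]
      det_psub_eq_det_pad_principal[OF B] by (simp add: Lset_def)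
qed

lemma group_inverse_cramer_row:
  fixes B G :: "complex mat"
  assumes B: "B \<in> carrier_mat m m" and G: "G \<in> carrier_mat m m" and BG: "group_inverse B G"
    and z: "z \<in> carrier_vec m" and y: "y = transpose_mat B *\<^sub>v z" and j: "j < m"
  shows "y $ j =
    (\<Sum>\<alpha>\<in>{\<alpha>\<in>Lset (vec_space.rank m B) m. j \<in> \<alpha>}.
       det (psub (replace_row B j (transpose_mat B *\<^sub>v y)) \<alpha>))
    / (\<Sum>\<alpha>\<in>Lset (vec_space.rank m B) m. det (psub B \<alpha>))"
proof -
  let ?r = "vec_space.rank m B"
  let ?BT = "transpose_mat B"
  have BT: "?BT \<in> carrier_mat m m" using B by simp
  have yc: "y \<in> carrier_vec m" unfolding y using B z by simp
  have pad_row: "det (pad_principal m \<alpha> (replace_row B j v))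
      = det (pad_principal m \<alpha> (replace_col ?BT j v))" for \<alpha> v
    unfolding replace_row_eq_transpose_replace_col[OF B]
    by (rule det_pad_principal_transpose) (use BT in simp)
  have "(\<Sum>\<alpha>\<in>{\<alpha>\<in>Lset ?r m. j \<in> \<alpha>}. det (psub (replace_row B j (?BT *\<^sub>v y)) \<alpha>))
      = (\<Sum>\<alpha>\<in>{\<alpha>\<in>Lset ?r m. j \<in> \<alpha>}. det (pad_principal m \<alpha> (replace_col ?BT j (?BT *\<^sub>v y))))"
    unfolding pad_row[symmetric] using B
    by (intro sum.cong refl det_psub_eq_det_pad_principal) (auto simp: Lset_def replace_row_def)
  also have "\<dots> = y $ j * (\<Sum>\<alpha>\<in>Lset ?r m. det (pad_principal m \<alpha> ?BT))"
  proof (rule sum_principal_minors_replace_col_mult_vec[OF BT yc j vec_space.rank_le_nc[OF B]])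
    fix \<alpha> assume "\<alpha> \<in> Lset (Suc ?r) m"
    then show "det (pad_principal m \<alpha> (replace_col ?BT j y)) = 0"
      unfolding pad_row[symmetric] y using det_pad_replace_row_range_eq_0[OF B z j]
      by (simp add: Lset_def)
  qed
  also have "(\<Sum>\<alpha>\<in>Lset ?r m. det (pad_principal m \<alpha> ?BT)) = (\<Sum>\<alpha>\<in>Lset ?r m. det (psub B \<alpha>))"
    using B by (intro sum.cong refl)
      (auto simp: Lset_def det_pad_principal_transpose det_psub_eq_det_pad_principal)
  finally show ?thesis
    using sum_principal_minors_group_inverse_neq_0[OF B G BG]
      det_psub_eq_det_pad_principal[OF B] by (simp add: Lset_def)
qed


section \<open>Drazin inverses\<close>

lemma pow_mat_Suc_left:
  fixes A :: "'a :: semiring_1 mat"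
  assumes A: "A \<in> carrier_mat n n"
  shows "A ^\<^sub>m Suc k = A * A ^\<^sub>m k"
proof (induct k)
  case 0 then show ?case using A by simp
next
  case (Suc k)
  have "A ^\<^sub>m Suc (Suc k) = (A * A ^\<^sub>m k) * A" using Suc by simp
  also have "\<dots> = A * (A ^\<^sub>m k * A)" by (rule assoc_mult_mat[OF A pow_carrier_mat[OF A] A])
  finally show ?case by simp
qed

lemma pow_mat_add:
  fixes A :: "'a :: semiring_1 mat"
  assumes A: "A \<in> carrier_mat n n"
  shows "A ^\<^sub>m (a + b) = A ^\<^sub>m a * A ^\<^sub>m b"
proof (induct b)
  case 0 then show ?case using A by simp
next
  case (Suc b)
  have "A ^\<^sub>m (a + Suc b) = (A ^\<^sub>m a * A ^\<^sub>m b) * A" using Suc by simp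
  also have "\<dots> = A ^\<^sub>m a * (A ^\<^sub>m b * A)"
    by (rule assoc_mult_mat[OF pow_carrier_mat[OF A] pow_carrier_mat[OF A] A])
  finally show ?case by simp
qed

lemma mult_pow_mat_intertwine:
  fixes Y M N :: "'a :: semiring_1 mat"
  assumes Y: "Y \<in> carrier_mat a b" and M: "M \<in> carrier_mat a a" and N: "N \<in> carrier_mat b b"
    and YN: "Y * N = M * Y"
  shows "Y * N ^\<^sub>m j = M ^\<^sub>m j * Y"
proof (induct j)
  case 0 then show ?case using Y M N by (simp add: carrier_matD)
next
  case (Suc j)
  have "Y * N ^\<^sub>m Suc j = (Y * N ^\<^sub>m j) * N"
    using assoc_mult_mat[OF Y pow_carrier_mat[OF N] N] by simp
  also have "\<dots> = M ^\<^sub>m j * (Y * N)"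
    unfolding Suc by (rule assoc_mult_mat[OF pow_carrier_mat[OF M] Y N])
  also have "\<dots> = (M ^\<^sub>m j * M) * Y"
    unfolding YN by (rule assoc_mult_mat[OF pow_carrier_mat[OF M] M Y, symmetric])
  finally show ?case by simp
qed

lemma pow_mat_mult_swap:
  fixes B C :: "'a :: semiring_1 mat"
  assumes B: "B \<in> carrier_mat a b" and C: "C \<in> carrier_mat b a"
  shows "(B * C) ^\<^sub>m Suc j = B * (C * B) ^\<^sub>m j * C"
proof -
  have BC: "B * C \<in> carrier_mat a a" and CB: "C * B \<in> carrier_mat b b" using B C by auto
  have "B * (C * B) ^\<^sub>m j = (B * C) ^\<^sub>m j * B"
    by (rule mult_pow_mat_intertwine[OF B BC CB]) (use B C in simp)
  then show ?thesis
    using assoc_mult_mat[OF pow_carrier_mat[OF BC] B C, of j] by simp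
qed

lemma pow_mat_commute:
  fixes M D :: "'a :: semiring_1 mat"
  assumes M: "M \<in> carrier_mat n n" and D: "D \<in> carrier_mat n n" and MD: "M * D = D * M"
  shows "M ^\<^sub>m j * D = D * M ^\<^sub>m j"
  using mult_pow_mat_intertwine[OF D M M MD[symmetric]] by simp

lemma pow_mat_mult_commute:
  fixes M D :: "'a :: semiring_1 mat"
  assumes M: "M \<in> carrier_mat n n" and D: "D \<in> carrier_mat n n" and MD: "M * D = D * M"
  shows "(M * D) ^\<^sub>m j = M ^\<^sub>m j * D ^\<^sub>m j"
proof (induct j)
  case 0 then show ?case using M D by (simp add: carrier_matD)
next
  case (Suc j)
  have Mj: "M ^\<^sub>m j \<in> carrier_mat n n" and Dj: "D ^\<^sub>m j \<in> carrier_mat n n" using M D by auto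
  have "D ^\<^sub>m j * M = M * D ^\<^sub>m j" using pow_mat_commute[OF D M MD[symmetric]] by simp
  then have "D ^\<^sub>m j * (M * D) = M * (D ^\<^sub>m j * D)"
    using assoc_mult_mat[OF Dj M D, symmetric] assoc_mult_mat[OF M Dj D] by simp
  then have "(M ^\<^sub>m j * D ^\<^sub>m j) * (M * D) = (M ^\<^sub>m j * M) * (D ^\<^sub>m j * D)"
    using assoc_mult_mat[OF Mj Dj mult_carrier_mat[OF M D]]
      assoc_mult_mat[OF Mj M mult_carrier_mat[OF Dj D]] by simp
  then show ?case using Suc by simp
qed

definition drazin_inverse :: "'a :: semiring_1 mat \<Rightarrow> 'a mat \<Rightarrow> nat \<Rightarrow> bool" where
  "drazin_inverse M D s \<longleftrightarrow> M * D = D * M \<and> D * M * D = D \<and> M ^\<^sub>m (s + 1) * D = M ^\<^sub>m s"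

lemma drazin_inverse_add:
  fixes M D :: "'a :: semiring_1 mat"
  assumes M: "M \<in> carrier_mat n n" and D: "D \<in> carrier_mat n n" and MD: "drazin_inverse M D s"
  shows "drazin_inverse M D (s + j)"
proof (induct j)
  case (Suc j)
  then have comm: "M * D = D * M" and pow: "M ^\<^sub>m Suc (s + j) * D = M ^\<^sub>m (s + j)"
    unfolding drazin_inverse_def by auto
  have Mp: "M ^\<^sub>m Suc (s + j) \<in> carrier_mat n n" by (rule pow_carrier_mat[OF M])
  have "M ^\<^sub>m Suc (Suc (s + j)) * D = M ^\<^sub>m Suc (s + j) * (D * M)"
    using assoc_mult_mat[OF Mp M D] comm by simp
  also have "\<dots> = M ^\<^sub>m Suc (s + j)"
    using assoc_mult_mat[OF Mp D M, symmetric] pow by simp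
  finally show ?case using Suc unfolding drazin_inverse_def by simp
qed (use MD in simp)

lemma drazin_inverse_pow_mult_pow:
  fixes M D :: "'a :: semiring_1 mat"
  assumes M: "M \<in> carrier_mat n n" and D: "D \<in> carrier_mat n n" and MD: "drazin_inverse M D s"
  shows "M ^\<^sub>m (s + j) * D ^\<^sub>m j = M ^\<^sub>m s"
proof (induct j)
  case 0 then show ?case using M D by simp
next
  case (Suc j)
  have "M ^\<^sub>m Suc (s + j) * D = M ^\<^sub>m (s + j)"
    using drazin_inverse_add[OF M D MD, of j] unfolding drazin_inverse_def by simp
  then have "M ^\<^sub>m Suc (s + j) * (D * D ^\<^sub>m j) = M ^\<^sub>m (s + j) * D ^\<^sub>m j"
    using assoc_mult_mat[OF pow_carrier_mat[OF M] D pow_carrier_mat[OF D], of "Suc (s + j)" j] by simp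
  then show ?case using Suc pow_mat_Suc_left[OF D, of j] by simp
qed

lemma rank_pow_drazin_inverse:
  fixes M D :: "'a :: field mat"
  assumes M: "M \<in> carrier_mat n n" and D: "D \<in> carrier_mat n n" and MD: "drazin_inverse M D s"
  shows "vec_space.rank n (M ^\<^sub>m (s + j)) = vec_space.rank n (M ^\<^sub>m s)"
proof (rule antisym)
  show "vec_space.rank n (M ^\<^sub>m (s + j)) \<le> vec_space.rank n (M ^\<^sub>m s)"
    unfolding pow_mat_add[OF M] by (rule rank_mult_le_left) (use M in auto)
  show "vec_space.rank n (M ^\<^sub>m s) \<le> vec_space.rank n (M ^\<^sub>m (s + j))"
    using rank_mult_le_left[OF pow_carrier_mat[OF M] pow_carrier_mat[OF D], of "s + j" j]
    unfolding drazin_inverse_pow_mult_pow[OF M D MD] .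
qed

lemma group_inverse_pow_drazin_inverse:
  fixes M D :: "'a :: semiring_1 mat"
  assumes M: "M \<in> carrier_mat n n" and D: "D \<in> carrier_mat n n" and MD: "drazin_inverse M D s"
  shows "group_inverse (M ^\<^sub>m Suc s) (D ^\<^sub>m Suc s)"
    and "M ^\<^sub>m Suc s * D ^\<^sub>m Suc s = M * D"
proof -
  from MD have comm: "M * D = D * M" and DMD: "D * M * D = D" and pow: "M ^\<^sub>m Suc s * D = M ^\<^sub>m s"
    unfolding drazin_inverse_def by auto
  have Ms: "M ^\<^sub>m Suc s \<in> carrier_mat n n" and Ds: "D ^\<^sub>m Suc s \<in> carrier_mat n n"
    and MD_c: "M * D \<in> carrier_mat n n" using M D by auto
  have "M * D * (M * D) = M * (D * M * D)"
    using assoc_mult_mat[OF M D MD_c] assoc_mult_mat[OF D M D] by simp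
  then have PP: "M * D * (M * D) = M * D" using DMD by simp
  have MD_idem: "(M * D) ^\<^sub>m Suc j = M * D" for j
    by (induct j) (use M D PP in simp_all)
  show MDs: "M ^\<^sub>m Suc s * D ^\<^sub>m Suc s = M * D"
    using pow_mat_mult_commute[OF M D comm, of "Suc s"] MD_idem[of s] by simp
  have "M * D ^\<^sub>m Suc s = D ^\<^sub>m Suc s * M"
    by (rule pow_mat_commute[OF D M comm[symmetric], symmetric])
  then have DMs: "D ^\<^sub>m Suc s * M ^\<^sub>m Suc s = M * D"
    using pow_mat_commute[OF M Ds, of "Suc s"] MDs by simp
  have "M ^\<^sub>m Suc s * D ^\<^sub>m Suc s * M ^\<^sub>m Suc s = M * (D * M ^\<^sub>m Suc s)"
    unfolding MDs by (rule assoc_mult_mat[OF M D pow_carrier_mat[OF M]])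
  also have "D * M ^\<^sub>m Suc s = M ^\<^sub>m Suc s * D" by (rule pow_mat_commute[OF M D comm, symmetric])
  also have "M * (M ^\<^sub>m Suc s * D) = M ^\<^sub>m Suc s" using pow pow_mat_Suc_left[OF M] by simp
  finally have BGB: "M ^\<^sub>m Suc s * D ^\<^sub>m Suc s * M ^\<^sub>m Suc s = M ^\<^sub>m Suc s" .
  have "D ^\<^sub>m Suc s * M ^\<^sub>m Suc s * D ^\<^sub>m Suc s = M * D * (D * D ^\<^sub>m s)"
    unfolding DMs using pow_mat_Suc_left[OF D] by simp
  also have "\<dots> = (M * D * D) * D ^\<^sub>m s" using M D by (simp add: assoc_mult_mat[of _ n n _ n _ n])
  also have "\<dots> = D * M * D * D ^\<^sub>m s" using comm by simp
  also have "\<dots> = D ^\<^sub>m Suc s" unfolding DMD using pow_mat_Suc_left[OF D] by simp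
  finally have GBG: "D ^\<^sub>m Suc s * M ^\<^sub>m Suc s * D ^\<^sub>m Suc s = D ^\<^sub>m Suc s" .
  show "group_inverse (M ^\<^sub>m Suc s) (D ^\<^sub>m Suc s)"
    unfolding group_inverse_def using BGB GBG MDs DMs by simp
qed

section \<open>The weighted Drazin inverse\<close>

locale weighted_drazin =
  fixes A W X :: "'a :: field mat" and m n k :: nat
  assumes A: "A \<in> carrier_mat m n" and W: "W \<in> carrier_mat n m" and X: "X \<in> carrier_mat m n"
    and pow_AW_XW: "(A * W) ^\<^sub>m (k + 1) * X * W = (A * W) ^\<^sub>m k"
    and XWAWX: "X * W * A * W * X = X"
    and AWX: "A * W * X = X * W * A"
begin

lemma AW: "A * W \<in> carrier_mat m m" and XW: "X * W \<in> carrier_mat m m"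
  and WA: "W * A \<in> carrier_mat n n" and WX: "W * X \<in> carrier_mat n n"
  using A W X by auto

lemma A_WX: "A * (W * X) = X * (W * A)"
  using AWX assoc_mult_mat[OF A W X] assoc_mult_mat[OF X W A] by simp

lemma XWAW_X: "X * W * (A * W) * X = X"
  using XWAWX assoc_mult_mat[OF mult_carrier_mat[OF X W] A W] by simp

lemma drazin_inverse_AW: "drazin_inverse (A * W) (X * W) k"
proof -
  have "A * W * (X * W) = A * W * X * W" by (rule assoc_mult_mat[OF AW X W, symmetric])
  also have "\<dots> = X * W * (A * W)" unfolding AWX by (rule assoc_mult_mat[OF XW A W])
  finally have comm: "A * W * (X * W) = X * W * (A * W)" .
  have "X * W * (A * W) * (X * W) = X * W * (A * W) * X * W"
    by (rule assoc_mult_mat[OF mult_carrier_mat[OF XW AW] X W, symmetric])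
  then have DMD: "X * W * (A * W) * (X * W) = X * W" unfolding XWAW_X .
  have "(A * W) ^\<^sub>m (k + 1) * (X * W) = (A * W) ^\<^sub>m k"
    using pow_AW_XW assoc_mult_mat[OF pow_carrier_mat[OF AW] X W, of "k + 1"] by simp
  then show ?thesis unfolding drazin_inverse_def using comm DMD by simp
qed

lemma drazin_inverse_WA: "drazin_inverse (W * A) (W * X) (k + 1)"
proof -
  have comm: "W * A * (W * X) = W * X * (W * A)"
    using assoc_mult_mat[OF W A WX] assoc_mult_mat[OF W X WA] A_WX by simp
  have "W * X * (W * A) * (W * X) = W * (X * (W * A) * (W * X))"
    using assoc_mult_mat[OF W X WA] assoc_mult_mat[OF W mult_carrier_mat[OF X WA] WX] by simp
  also have "X * (W * A) * (W * X) = X * W * (A * W) * X"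
    using assoc_mult_mat[OF X W A] assoc_mult_mat[OF mult_carrier_mat[OF X W] A W]
      assoc_mult_mat[OF mult_carrier_mat[OF X W] A WX] assoc_mult_mat[OF mult_carrier_mat[OF X W] AW X]
      assoc_mult_mat[OF A W X] by simp
  finally have DMD: "W * X * (W * A) * (W * X) = W * X" unfolding XWAW_X .
  have P: "(A * W) ^\<^sub>m (k + 1) \<in> carrier_mat m m" by (rule pow_carrier_mat[OF AW])
  have "(W * A) ^\<^sub>m (k + 1 + 1) * (W * X) = W * (A * W) ^\<^sub>m (k + 1) * A * (W * X)"
    using pow_mat_mult_swap[OF W A, of "k + 1"] by simp
  also have "\<dots> = W * ((A * W) ^\<^sub>m (k + 1) * X * W * A)"
    using assoc_mult_mat[OF mult_carrier_mat[OF W P] A WX] assoc_mult_mat[OF W P mult_carrier_mat[OF A WX]]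
      assoc_mult_mat[OF P X WA] assoc_mult_mat[OF mult_carrier_mat[OF P X] W A] A_WX by simp
  also have "\<dots> = W * (A * W) ^\<^sub>m k * A"
    unfolding pow_AW_XW using assoc_mult_mat[OF W pow_carrier_mat[OF AW] A] by simp
  also have "\<dots> = (W * A) ^\<^sub>m (k + 1)" using pow_mat_mult_swap[OF W A, of k] by simp
  finally show ?thesis unfolding drazin_inverse_def using comm DMD by simp
qed

lemma group_inverse_AW: "group_inverse ((A * W) ^\<^sub>m (k + 2)) ((X * W) ^\<^sub>m (k + 2))"
  and pow_AW_mult_pow_XW: "(A * W) ^\<^sub>m (k + 2) * (X * W) ^\<^sub>m (k + 2) = A * W * (X * W)"
  using group_inverse_pow_drazin_inverse[OF AW XW drazin_inverse_add[OF AW XW drazin_inverse_AW, of 1]]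
  by (simp_all add: numeral_2_eq_2)

lemma group_inverse_WA: "group_inverse ((W * A) ^\<^sub>m (k + 2)) ((W * X) ^\<^sub>m (k + 2))"
  and pow_WA_mult_pow_WX: "(W * A) ^\<^sub>m (k + 2) * (W * X) ^\<^sub>m (k + 2) = W * A * (W * X)"
  using group_inverse_pow_drazin_inverse[OF WA WX drazin_inverse_WA]
  by (simp_all add: numeral_2_eq_2)

lemma pow_AW_range: "(A * W) ^\<^sub>m (k + 2) * ((X * W) ^\<^sub>m (k + 2) * X) = X"
proof -
  have "(A * W) ^\<^sub>m (k + 2) * ((X * W) ^\<^sub>m (k + 2) * X) = A * W * (X * W) * X"
    using assoc_mult_mat[OF pow_carrier_mat[OF AW] pow_carrier_mat[OF XW] X, of "k + 2" "k + 2"]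
      pow_AW_mult_pow_XW by simp
  also have "\<dots> = X"
    using drazin_inverse_AW XWAW_X unfolding drazin_inverse_def by simp
  finally show ?thesis .
qed

lemma pow_AW_mult_X: "(A * W) ^\<^sub>m (k + 2) * X = (A * W) ^\<^sub>m k * A"
proof -
  have P: "(A * W) ^\<^sub>m (k + 1) \<in> carrier_mat m m" by (rule pow_carrier_mat[OF AW])
  have "(A * W) ^\<^sub>m (k + 2) * X = (A * W) ^\<^sub>m (k + 1) * (A * W * X)"
    using assoc_mult_mat[OF P AW X] by (simp add: numeral_2_eq_2)
  also have "\<dots> = (A * W) ^\<^sub>m (k + 1) * X * W * A"
    unfolding AWX using assoc_mult_mat[OF P mult_carrier_mat[OF X W] A]
      assoc_mult_mat[OF P X W] by simp
  finally show ?thesis unfolding pow_AW_XW .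
qed

lemma pow_WA_range: "X * (W * X) ^\<^sub>m (k + 2) * (W * A) ^\<^sub>m (k + 2) = X"
proof -
  have comm: "(W * X) ^\<^sub>m (k + 2) * (W * A) ^\<^sub>m (k + 2) = W * A * (W * X)"
    using group_inverse_WA pow_WA_mult_pow_WX unfolding group_inverse_def by simp
  have "X * (W * X) ^\<^sub>m (k + 2) * (W * A) ^\<^sub>m (k + 2) = X * (W * A * (W * X))"
    unfolding comm[symmetric] by (rule assoc_mult_mat[OF X pow_carrier_mat[OF WX] pow_carrier_mat[OF WA]])
  also have "\<dots> = X * W * (A * W) * X"
    using assoc_mult_mat[OF X WA WX] assoc_mult_mat[OF X W A] assoc_mult_mat[OF mult_carrier_mat[OF X W] A WX]
      assoc_mult_mat[OF mult_carrier_mat[OF X W] A W] assoc_mult_mat[OF mult_carrier_mat[OF X W] AW X]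
      assoc_mult_mat[OF A W X] by simp
  finally show ?thesis unfolding XWAW_X .
qed

lemma X_mult_pow_WA: "X * (W * A) ^\<^sub>m (k + 2) = A * (W * A) ^\<^sub>m k"
proof -
  have "X * (W * A) = A * W * X" unfolding AWX by (rule assoc_mult_mat[OF X W A, symmetric])
  then have "X * (W * A) ^\<^sub>m (k + 2) = (A * W) ^\<^sub>m (k + 2) * X"
    by (rule mult_pow_mat_intertwine[OF X AW WA])
  also have "\<dots> = A * (W * A) ^\<^sub>m k"
    unfolding pow_AW_mult_X
    by (rule mult_pow_mat_intertwine[OF A AW WA assoc_mult_mat[OF A W A, symmetric], symmetric])
  finally show ?thesis .
qed

lemma col_X_range:
  assumes "j < n"
  shows "col X j = (A * W) ^\<^sub>m (k + 2) *\<^sub>v col ((X * W) ^\<^sub>m (k + 2) * X) j"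
  using col_mult2[OF pow_carrier_mat[OF AW, of "k + 2"]
    mult_carrier_mat[OF pow_carrier_mat[OF XW, of "k + 2"] X] assms]
  by (simp only: pow_AW_range)

lemma pow_AW_mult_col_X:
  assumes "j < n"
  shows "(A * W) ^\<^sub>m (k + 2) *\<^sub>v col X j = col ((A * W) ^\<^sub>m k * A) j"
  using col_mult2[OF pow_carrier_mat[OF AW, of "k + 2"] X assms]
  by (simp only: pow_AW_mult_X)

lemma row_X_range:
  assumes "i < m"
  shows "row X i = transpose_mat ((W * A) ^\<^sub>m (k + 2)) *\<^sub>v row (X * (W * X) ^\<^sub>m (k + 2)) i"
  using row_mult_eq_transpose_mult_vec[OF mult_carrier_mat[OF X pow_carrier_mat[OF WX, of "k + 2"]]
    pow_carrier_mat[OF WA, of "k + 2"] assms]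
  by (simp only: pow_WA_range)

lemma transpose_pow_WA_mult_row_X:
  assumes "i < m"
  shows "transpose_mat ((W * A) ^\<^sub>m (k + 2)) *\<^sub>v row X i = row (A * (W * A) ^\<^sub>m k) i"
  using row_mult_eq_transpose_mult_vec[OF X pow_carrier_mat[OF WA, of "k + 2"] assms]
  by (simp only: X_mult_pow_WA)

lemma rank_pow_AW: "vec_space.rank m ((A * W) ^\<^sub>m (k + 2)) = vec_space.rank m ((A * W) ^\<^sub>m k)"
  by (rule rank_pow_drazin_inverse[OF AW XW drazin_inverse_AW])

lemma rank_pow_WA: "vec_space.rank n ((W * A) ^\<^sub>m (k + 2)) = vec_space.rank m ((A * W) ^\<^sub>m k)"
proof (rule antisym)
  have P: "(A * W) ^\<^sub>m k \<in> carrier_mat m m" by (rule pow_carrier_mat[OF AW])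
  have Q: "(W * A) ^\<^sub>m (k + 1) \<in> carrier_mat n n" by (rule pow_carrier_mat[OF WA])
  have "vec_space.rank n ((W * A) ^\<^sub>m (k + 2)) = vec_space.rank n ((W * A) ^\<^sub>m (k + 1))"
    using rank_pow_drazin_inverse[OF WA WX drazin_inverse_WA, of 1] by (simp add: numeral_2_eq_2)
  also have "(W * A) ^\<^sub>m (k + 1) = W * ((A * W) ^\<^sub>m k * A)"
    using pow_mat_mult_swap[OF W A, of k] assoc_mult_mat[OF W P A] by simp
  also have "vec_space.rank n \<dots> \<le> vec_space.rank m ((A * W) ^\<^sub>m k * A)"
    by (rule rank_mult_le_right[OF W mult_carrier_mat[OF P A]])
  also have "\<dots> \<le> vec_space.rank m ((A * W) ^\<^sub>m k)" by (rule rank_mult_le_left[OF P A])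
  finally show "vec_space.rank n ((W * A) ^\<^sub>m (k + 2)) \<le> vec_space.rank m ((A * W) ^\<^sub>m k)" .
  have "vec_space.rank m ((A * W) ^\<^sub>m k) = vec_space.rank m (A * ((W * A) ^\<^sub>m (k + 1) * W))"
    using rank_pow_AW pow_mat_mult_swap[OF A W, of "k + 1"] assoc_mult_mat[OF A Q W]
    by (simp add: numeral_2_eq_2)
  also have "\<dots> \<le> vec_space.rank n ((W * A) ^\<^sub>m (k + 1) * W)"
    by (rule rank_mult_le_right[OF A mult_carrier_mat[OF Q W]])
  also have "\<dots> \<le> vec_space.rank n ((W * A) ^\<^sub>m (k + 1))" by (rule rank_mult_le_left[OF Q W])
  also have "\<dots> = vec_space.rank n ((W * A) ^\<^sub>m (k + 2))"
    using rank_pow_drazin_inverse[OF WA WX drazin_inverse_WA, of 1] by (simp add: numeral_2_eq_2)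
  finally show "vec_space.rank m ((A * W) ^\<^sub>m k) \<le> vec_space.rank n ((W * A) ^\<^sub>m (k + 2))" .
qed

end


theorem theorem2p8:
  fixes A W X :: "complex mat" and m n k r :: nat
  assumes A: "A \<in> carrier_mat m n" and W: "W \<in> carrier_mat n m"
    and k: "k = max (mind (A * W)) (mind (W * A))"
    and r: "r = mrank ((A * W) ^\<^sub>m k)"
    and X: "is_wdrazin A W X"
  shows "\<forall>i<m. \<forall>j<n.
     X $$ (i,j) =
       (\<Sum>\<beta>\<in>{\<beta>\<in>Lset r m. i \<in> \<beta>}.
          det (psub (replace_col ((A * W) ^\<^sub>m (k+2)) i (col ((A * W) ^\<^sub>m k * A) j)) \<beta>))
       / (\<Sum>\<beta>\<in>Lset r m. det (psub ((A * W) ^\<^sub>m (k+2)) \<beta>))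
     \<and>
     X $$ (i,j) =
       (\<Sum>\<alpha>\<in>{\<alpha>\<in>Lset r n. j \<in> \<alpha>}.
          det (psub (replace_row ((W * A) ^\<^sub>m (k+2)) j (row (A * (W * A) ^\<^sub>m k) i)) \<alpha>))
       / (\<Sum>\<alpha>\<in>Lset r n. det (psub ((W * A) ^\<^sub>m (k+2)) \<alpha>))"
proof (intro allI impI conjI)
  fix i j assume i: "i < m" and j: "j < n"
  have "X \<in> carrier_mat m n" "(A * W) ^\<^sub>m (k + 1) * X * W = (A * W) ^\<^sub>m k"
    "X * W * A * W * X = X" "A * W * X = X * W * A"
    using X A unfolding is_wdrazin_def Let_def k[symmetric] by auto
  then interpret weighted_drazin A W X m n k using A W by unfold_locales
  have r_AW: "vec_space.rank m ((A * W) ^\<^sub>m (k + 2)) = r"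
    and r_WA: "vec_space.rank n ((W * A) ^\<^sub>m (k + 2)) = r"
    using rank_pow_AW rank_pow_WA A unfolding r mrank_def by simp_all
  have B: "(A * W) ^\<^sub>m (k + 2) \<in> carrier_mat m m" and G: "(X * W) ^\<^sub>m (k + 2) \<in> carrier_mat m m"
    and B': "(W * A) ^\<^sub>m (k + 2) \<in> carrier_mat n n" and G': "(W * X) ^\<^sub>m (k + 2) \<in> carrier_mat n n"
    using pow_carrier_mat[OF AW] pow_carrier_mat[OF XW] pow_carrier_mat[OF WA] pow_carrier_mat[OF WX]
    by blast+
  have zc: "col ((X * W) ^\<^sub>m (k + 2) * X) j \<in> carrier_vec m"
    unfolding carrier_vec_def using mult_carrier_mat[OF G X] by auto
  from group_inverse_cramer_col[OF B G group_inverse_AW zc col_X_range[OF j] i]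
  show "X $$ (i,j) =
       (\<Sum>\<beta>\<in>{\<beta>\<in>Lset r m. i \<in> \<beta>}.
          det (psub (replace_col ((A * W) ^\<^sub>m (k+2)) i (col ((A * W) ^\<^sub>m k * A) j)) \<beta>))
       / (\<Sum>\<beta>\<in>Lset r m. det (psub ((A * W) ^\<^sub>m (k+2)) \<beta>))"
    unfolding pow_AW_mult_col_X[OF j] r_AW using X i j by simp
  have zr: "row (X * (W * X) ^\<^sub>m (k + 2)) i \<in> carrier_vec n"
    unfolding carrier_vec_def using mult_carrier_mat[OF X G'] by auto
  from group_inverse_cramer_row[OF B' G' group_inverse_WA zr row_X_range[OF i] j]
  show "X $$ (i,j) =
       (\<Sum>\<alpha>\<in>{\<alpha>\<in>Lset r n. j \<in> \<alpha>}.
          det (psub (replace_row ((W * A) ^\<^sub>m (k+2)) j (row (A * (W * A) ^\<^sub>m k) i)) \<alpha>))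
       / (\<Sum>\<alpha>\<in>Lset r n. det (psub ((W * A) ^\<^sub>m (k+2)) \<alpha>))"
    unfolding transpose_pow_WA_mult_row_X[OF i] r_WA using X i j by simp
qed

end
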